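(* Let $A=(a_{nk})$ be an infinite complex matrix with $l_A\supseteq\phi$, and suppose that $D_p^qF(l_A)=l_A$. Then $A$ is $l$-replaceable if and only if $l_A\subseteq\sigma_p^q[s]$.
   Context: Fix sequences $p=(p(n))$, $q=(q(n))$ of nonnegative integers with $p(n)<q(n)$ for all $n$ and $q(n)\to\infty$. $\delta^j$ denotes the sequence with $1$ in position $j$ and $0$ elsewhere, and $\phi$ the linear span of all $\delta^j$. For a matrix $A$, $l_A=\{x : \sum_k a_{nk}x_k \text{ converges for each } n \text{ and } \sum_n|\sum_k a_{nk}x_k|<\infty\}$, an FK-space with its usual topology (seminorms $|x_n|$, $\sum_n|\sum_k a_{nk}x_k|$, $\sup_m|\sum_{k=1}^m a_{nk}x_k|$); $l_A'$ is its continuous dual. $A$ is called $l$-replaceable if there is a matrix $D=(d_{nk})$ with $l_D=l_A$ and $\sum_n d_{nk}=1$ for every $k$. $\sigma_p^q[s]=\{x : \lim_n \frac{1}{q(n)-p(n)}\sum_{k=p(n)+1}^{q(n)}\sum_{j=1}^k x_j \text{ exists}\}$. For an FK-space $X\supseteq\phi$: $D_p^qF^+(X)=\{x\in w : \lim_n \frac{1}{q(n)-p(n)}\sum_{k=p(n)+1}^{q(n)}\sum_{j=1}^k x_jf(\delta^j) \text{ exists for all } f\in X'\}$ and $D_p^qF(X)=D_p^qF^+(X)\cap X$, where $w$ is the space of all complex sequences. *)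

theory Defs
  imports Complex_Main
begin

text \<open>Conventions: sequences and matrices are indexed from 0, i.e. the paper's
  x_1, x_2, ... is represented by x 0, x 1, ...; similarly a_{nk} by A (n-1) (k-1).\<close>

type_synonym seq = "nat \<Rightarrow> complex"
type_synonym cmatrix = "nat \<Rightarrow> nat \<Rightarrow> complex"

definition delta :: "nat \<Rightarrow> seq" where
  "delta j = (\<lambda>i. if i = j then 1 else 0)"

definition phi :: "seq set" where
  "phi = {x. \<exists>F. finite F \<and> (\<forall>k. k \<notin> F \<longrightarrow> x k = 0)}"

definition lA :: "cmatrix \<Rightarrow> seq set" where
  "lA A = {x. (\<forall>n. summable (\<lambda>k. A n k * x k))
             \<and> summable (\<lambda>n. norm (\<Sum>k. A n k * x k))}"

text \<open>Index set of the defining seminorms of the FK topology of l_A.\<close>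
datatype semi_idx = Coord nat | Total | Row nat

definition seminorm_lA :: "cmatrix \<Rightarrow> semi_idx \<Rightarrow> seq \<Rightarrow> real" where
  "seminorm_lA A i x = (case i of
      Coord n \<Rightarrow> norm (x n)
    | Total \<Rightarrow> (\<Sum>n. norm (\<Sum>k. A n k * x k))
    | Row n \<Rightarrow> (SUP m. norm (\<Sum>k<m. A n k * x k)))"

text \<open>Continuous dual l_A': linear functionals on l_A that are continuous for the
  locally convex topology generated by the seminorms above (continuity at every
  point, with neighbourhoods given by finite intersections of seminorm balls).\<close>
definition lA_dual :: "cmatrix \<Rightarrow> (seq \<Rightarrow> complex) set" where
  "lA_dual A = {f.
     (\<forall>x\<in>lA A. \<forall>y\<in>lA A. f (\<lambda>k. x k + y k) = f x + f y)
   \<and> (\<forall>x\<in>lA A. \<forall>c. f (\<lambda>k. c * x k) = c * f x)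
   \<and> (\<forall>x\<in>lA A. \<forall>e>0. \<exists>S d. finite S \<and> d > 0 \<and>
        (\<forall>y\<in>lA A. (\<forall>i\<in>S. seminorm_lA A i (\<lambda>k. y k - x k) < d) \<longrightarrow> norm (f y - f x) < e))}"

definition l_replaceable :: "cmatrix \<Rightarrow> bool" where
  "l_replaceable A \<longleftrightarrow> (\<exists>D. lA D = lA A \<and> (\<forall>k. (\<lambda>n. D n k) sums 1))"

text \<open>Cesaro-type mean (1/(q n - p n)) sum_{k=p n+1}^{q n} sum_{j=1}^k y_j
  (paper indexing), with y_j = x_j f(delta^j) etc.\<close>
definition mean_pq :: "(nat \<Rightarrow> nat) \<Rightarrow> (nat \<Rightarrow> nat) \<Rightarrow> seq \<Rightarrow> nat \<Rightarrow> complex" where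
  "mean_pq p q y n = (1 / of_nat (q n - p n)) * (\<Sum>k\<in>{p n + 1..q n}. \<Sum>j<k. y j)"

definition sigma_pq_s :: "(nat \<Rightarrow> nat) \<Rightarrow> (nat \<Rightarrow> nat) \<Rightarrow> seq set" where
  "sigma_pq_s p q = {x. convergent (mean_pq p q x)}"

definition DF_plus_lA :: "(nat \<Rightarrow> nat) \<Rightarrow> (nat \<Rightarrow> nat) \<Rightarrow> cmatrix \<Rightarrow> seq set" where
  "DF_plus_lA p q A = {x. \<forall>f\<in>lA_dual A.
      convergent (mean_pq p q (\<lambda>j. x j * f (delta j)))}"

definition DF_lA :: "(nat \<Rightarrow> nat) \<Rightarrow> (nat \<Rightarrow> nat) \<Rightarrow> cmatrix \<Rightarrow> seq set" where
  "DF_lA p q A = DF_plus_lA p q A \<inter> lA A"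

end

(* (=>) If D replaces A, then F x = sum_n (Dx)_n is a continuous linear functional on l_A with
   F(delta^j) = 1 for every j, so the hypothesis D_p^q F(l_A) = l_A puts every x in l_A into
   sigma_p^q[s].  Continuity comes from the Banach-Steinhaus theorem for the Frechet space l_A:
   F is the pointwise limit of the continuous functionals sum_{n<M} (Dx)_n.

   (<=) If l_A is contained in sigma_p^q[s], the limit of the (p,q)-means is, again by
   Banach-Steinhaus, a continuous functional on l_A; on phi it is x |-> sum_k x_k, so
   |sum_k x_k| <= C p_N(x) on phi for a single seminorm p_N.  The seminorm p_N is the norm of the
   image of x in C^N x l^1 x (l^infinity)^N (coordinates, Ax, partial row sums), and a
   Hahn-Banach extension there (in countably many directions, so without Zorn's lemma) yields
   coefficients alpha_j, beta_n, eta_{n,m}, gamma_n.  Testing the extension on the images of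
   the unit vectors gives, with theta_{n,k} = gamma_n - sum_{m=1..k} eta_{n,m} of bounded
   variation in k,
     [k < N] alpha_k + sum_n a_{nk} beta_n + sum_{n<N} a_{nk} theta_{n,k} = 1.
   Interleaving the rows of A with the rows
     (beta_n - 1) a_{nk} + [n < N] (alpha_n [k = n] + theta_{n,k} a_{nk})
   therefore gives a matrix with the same summability domain and all column sums 1. *)

theory Submission
  imports Defs "HOL-Analysis.Analysis" "HOL-Library.Countable"
begin

definition sup_norm :: "(nat \<Rightarrow> 'a::real_normed_vector) \<Rightarrow> real" where
  "sup_norm s = (SUP m. norm (s m))"

lemma sup_norm_upper: "Bseq s \<Longrightarrow> norm (s m) \<le> sup_norm s"
  unfolding sup_norm_def by (rule cSUP_upper[OF _ Bseq_bdd_above']) auto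

lemma sup_norm_least: "(\<And>m. norm (s m) \<le> B) \<Longrightarrow> sup_norm s \<le> B"
  unfolding sup_norm_def by (rule cSUP_least) auto

lemma sup_norm_nonneg: "Bseq s \<Longrightarrow> 0 \<le> sup_norm s"
  using sup_norm_upper[of s 0] norm_ge_zero order_trans by blast

lemma sup_norm_zero [simp]: "sup_norm (\<lambda>m. 0) = 0"
  by (simp add: sup_norm_def)

lemma sup_norm_add:
  assumes "Bseq s" "Bseq s'"
  shows "sup_norm (\<lambda>m. s m + s' m) \<le> sup_norm s + sup_norm s'"
  by (rule sup_norm_least, rule order_trans[OF norm_triangle_ineq])
     (intro add_mono sup_norm_upper assms)

lemma sup_norm_scale:
  fixes s :: "nat \<Rightarrow> 'a::real_normed_div_algebra"
  assumes "Bseq s"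
  shows "sup_norm (\<lambda>m. c * s m) = norm c * sup_norm s"
proof -
  have le: "sup_norm (\<lambda>m. a * t m) \<le> norm a * sup_norm t" if "Bseq t" for a and t :: "nat \<Rightarrow> 'a"
    by (rule sup_norm_least) (simp add: norm_mult mult_left_mono sup_norm_upper that)
  show ?thesis
  proof (cases "c = 0")
    case False
    obtain K where "\<And>m. norm (s m) \<le> K" using assms Bseq_def by blast
    then have "Bseq (\<lambda>m. c * s m)"
      by (intro BseqI'[of _ "norm c * K"]) (simp add: norm_mult mult_left_mono)
    then have "sup_norm (\<lambda>m. inverse c * (c * s m)) \<le> norm (inverse c) * sup_norm (\<lambda>m. c * s m)"
      by (rule le)
    then have "sup_norm s \<le> sup_norm (\<lambda>m. c * s m) / norm c"
      using False by (simp add: mult.assoc[symmetric] norm_inverse divide_inverse mult.commute)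
    then have "norm c * sup_norm s \<le> sup_norm (\<lambda>m. c * s m)"
      using False by (simp add: pos_le_divide_eq mult.commute)
    then show ?thesis using le[OF assms, of c] by linarith
  qed simp
qed

definition l1_norm :: "(nat \<Rightarrow> 'a::real_normed_vector) \<Rightarrow> real" where
  "l1_norm w = (\<Sum>n. norm (w n))"

lemma l1_norm_nonneg: "summable (\<lambda>n. norm (w n)) \<Longrightarrow> 0 \<le> l1_norm w"
  unfolding l1_norm_def by (rule suminf_nonneg) auto

lemma norm_le_l1_norm: "summable (\<lambda>n. norm (w n)) \<Longrightarrow> norm (w n) \<le> l1_norm w"
  unfolding l1_norm_def using sum_le_suminf[of "\<lambda>n. norm (w n)" "{n}"] by simp

lemma summable_norm_add:
  fixes w w' :: "nat \<Rightarrow> 'a::real_normed_vector"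
  assumes "summable (\<lambda>n. norm (w n))" "summable (\<lambda>n. norm (w' n))"
  shows "summable (\<lambda>n. norm (w n + w' n))"
  by (rule summable_comparison_test'[OF summable_add[OF assms], of 0]) (simp add: norm_triangle_ineq)

lemma l1_norm_add:
  assumes "summable (\<lambda>n. norm (w n))" "summable (\<lambda>n. norm (w' n))"
  shows "l1_norm (\<lambda>n. w n + w' n) \<le> l1_norm w + l1_norm w'"
  unfolding l1_norm_def suminf_add[OF assms]
  by (intro suminf_le summable_norm_add summable_add assms norm_triangle_ineq)

lemma l1_norm_scale:
  fixes w :: "nat \<Rightarrow> 'a::real_normed_div_algebra"
  shows "summable (\<lambda>n. norm (w n)) \<Longrightarrow> l1_norm (\<lambda>n. c * w n) = norm c * l1_norm w"
  unfolding l1_norm_def by (simp add: norm_mult suminf_mult)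

lemma tendsto_zero_if_eventually_le:
  fixes f :: "'a \<Rightarrow> real"
  assumes "\<forall>\<^sub>F i in F. 0 \<le> f i" and "\<And>e. e > 0 \<Longrightarrow> \<forall>\<^sub>F i in F. f i \<le> e"
  shows "(f \<longlongrightarrow> 0) F"
proof (rule order_tendstoI)
  show "\<forall>\<^sub>F i in F. a < f i" if "a < 0" for a
    using assms(1) by eventually_elim (use that in linarith)
  show "\<forall>\<^sub>F i in F. f i < a" if "0 < a" for a
  proof -
    have "\<forall>\<^sub>F i in F. f i \<le> a / 2" by (rule assms(2)) (use that in simp)
    then show ?thesis by eventually_elim (use that in linarith)
  qed
qed

lemma summation_by_parts:
  fixes a y :: "nat \<Rightarrow> 'a::comm_ring"
  shows "(\<Sum>k<K. a k * y k)
    = a K * (\<Sum>k<K. y k) - (\<Sum>k<K. (a (Suc k) - a k) * (\<Sum>j<Suc k. y j))"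
  by (induction K) (simp_all add: algebra_simps)

lemma summable_mult_bounded_variation:
  fixes a y :: "nat \<Rightarrow> 'a::{banach, real_normed_field}"
  assumes bv: "summable (\<lambda>k. norm (a (Suc k) - a k))" and y: "summable y"
  shows "summable (\<lambda>k. a k * y k)"
proof -
  have "convergent (\<lambda>K. a 0 + (\<Sum>k<K. a (Suc k) - a k))"
    using summable_norm_cancel[OF bv] by (intro convergent_add convergent_const) (simp add: summable_iff_convergent)
  then have a: "convergent a" by (simp add: sum_lessThan_telescope)
  have Y: "convergent (\<lambda>K. \<Sum>k<K. y k)" using y by (simp add: summable_iff_convergent)
  obtain B where B: "\<And>K. norm (\<Sum>k<K. y k) \<le> B"
    using convergent_imp_Bseq[OF Y] unfolding Bseq_def by blast
  have "summable (\<lambda>k. (a (Suc k) - a k) * (\<Sum>j<Suc k. y j))"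
    by (rule summable_norm_cancel, rule summable_comparison_test'[OF summable_mult2[OF bv, of B]])
      (simp del: sum.lessThan_Suc add: norm_mult mult_left_mono B)
  then have "convergent (\<lambda>K. a K * (\<Sum>k<K. y k) - (\<Sum>k<K. (a (Suc k) - a k) * (\<Sum>j<Suc k. y j)))"
    unfolding summable_iff_convergent by (rule convergent_diff[OF convergent_mult[OF a Y]])
  then have "convergent (\<lambda>K. \<Sum>k<K. a k * y k)"
    by (subst (asm) summation_by_parts[symmetric])
  then show ?thesis by (simp only: summable_iff_convergent)
qed

lemma sum_interleave:
  fixes f g :: "nat \<Rightarrow> 'a::comm_monoid_add"
  shows "(\<Sum>r<2 * R. if even r then f (r div 2) else g (r div 2)) = (\<Sum>n<R. f n) + (\<Sum>n<R. g n)"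
  by (induction R) (simp_all add: add_ac)

lemma interleave_sums:
  fixes f g :: "nat \<Rightarrow> 'a::banach"
  assumes f: "summable (\<lambda>n. norm (f n))" and g: "summable (\<lambda>n. norm (g n))"
  defines "h \<equiv> \<lambda>r. if even r then f (r div 2) else g (r div 2)"
  shows "summable (\<lambda>r. norm (h r))" and "h sums (suminf f + suminf g)"
proof -
  show h: "summable (\<lambda>r. norm (h r))"
  proof (rule summableI_nonneg_bounded)
    fix R
    have "(\<Sum>r<R. norm (h r)) \<le> (\<Sum>r<2 * R. norm (h r))" by (intro sum_mono2) auto
    also have "\<dots> = (\<Sum>n<R. norm (f n)) + (\<Sum>n<R. norm (g n))"
      using sum_interleave[of "\<lambda>n. norm (f n)" "\<lambda>n. norm (g n)" R]
      by (simp add: h_def if_distrib[of norm])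
    also have "\<dots> \<le> (\<Sum>n. norm (f n)) + (\<Sum>n. norm (g n))"
      by (intro add_mono sum_le_suminf f g) auto
    finally show "(\<Sum>r<R. norm (h r)) \<le> \<dots>" .
  qed simp
  have "(\<lambda>R. \<Sum>r<2 * R. h r) = (\<lambda>R. (\<Sum>n<R. f n) + (\<Sum>n<R. g n))"
    by (simp add: h_def sum_interleave)
  then have "(\<lambda>R. \<Sum>r<2 * R. h r) \<longlonglongrightarrow> suminf f + suminf g"
    using tendsto_add[OF summable_LIMSEQ[OF summable_norm_cancel[OF f]]
        summable_LIMSEQ[OF summable_norm_cancel[OF g]]] by simp
  moreover have "(\<lambda>R. \<Sum>r<2 * R. h r) \<longlonglongrightarrow> suminf h"
    using LIMSEQ_subseq_LIMSEQ[OF summable_LIMSEQ[OF summable_norm_cancel[OF h]], of "\<lambda>R. 2 * R"]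
    by (simp add: strict_mono_def comp_def)
  ultimately show "h sums (suminf f + suminf g)"
    using summable_norm_cancel[OF h] LIMSEQ_unique by (fastforce simp: sums_iff)
qed

lemma summable_even_part:
  fixes h :: "nat \<Rightarrow> real"
  assumes "summable h" "\<And>r. 0 \<le> h r"
  shows "summable (\<lambda>n. h (2 * n))"
proof (rule summableI_nonneg_bounded)
  fix R
  have "(\<Sum>n<R. h (2 * n)) \<le> (\<Sum>r<2 * R. if even r then h r else 0)"
    using sum_interleave[of "\<lambda>n. h (2 * n)" "\<lambda>_. 0" R] by (simp add: if_distrib cong: if_cong)
  also have "\<dots> \<le> (\<Sum>r<2 * R. h r)" by (intro sum_mono) (simp add: assms)
  also have "\<dots> \<le> suminf h" by (intro sum_le_suminf assms) auto
  finally show "(\<Sum>n<R. h (2 * n)) \<le> suminf h" .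
qed (simp add: assms)

lemma suminf_tail_tendsto_zero:
  fixes a :: "nat \<Rightarrow> real"
  assumes "summable a"
  shows "(\<lambda>M. \<Sum>n. a (n + M)) \<longlonglongrightarrow> 0"
  using tendsto_diff[OF tendsto_const summable_LIMSEQ[OF assms], of "suminf a"]
  by (simp add: suminf_minus_initial_segment[OF assms])

section \<open>The seminorms of l_A\<close>

definition row_sum :: "cmatrix \<Rightarrow> nat \<Rightarrow> seq \<Rightarrow> complex" where
  "row_sum A n x = (\<Sum>k. A n k * x k)"

definition row_partial :: "cmatrix \<Rightarrow> nat \<Rightarrow> seq \<Rightarrow> nat \<Rightarrow> complex" where
  "row_partial A n x m = (\<Sum>k<m. A n k * x k)"

text \<open>\<open>lA_seminorm A N\<close> is the sum of the defining seminorms \<open>seminorm_lA A (Coord j)\<close>,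
  \<open>j < N\<close>, \<open>seminorm_lA A Total\<close> and \<open>seminorm_lA A (Row n)\<close>, \<open>n < N\<close>; it increases with
  \<open>N\<close>, so these countably many seminorms alone generate the topology of l_A.\<close>
definition lA_seminorm :: "cmatrix \<Rightarrow> nat \<Rightarrow> seq \<Rightarrow> real" where
  "lA_seminorm A N x = (\<Sum>j<N. norm (x j)) + l1_norm (\<lambda>n. row_sum A n x)
     + (\<Sum>n<N. sup_norm (row_partial A n x))"

lemma row_sum_delta: "row_sum A n (delta k) = A n k"
proof -
  have "(\<lambda>j. A n j * delta k j) = (\<lambda>j. if j = k then A n k else 0)" by (auto simp: delta_def)
  then show ?thesis using sums_single[of k "\<lambda>_. A n k"] by (simp add: row_sum_def sums_iff)
qed

lemma lA_iff:
  "x \<in> lA A \<longleftrightarrow> (\<forall>n. summable (\<lambda>k. A n k * x k)) \<and> summable (\<lambda>n. norm (row_sum A n x))"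
  by (simp add: lA_def row_sum_def)

lemma lA_summable_row: "x \<in> lA A \<Longrightarrow> summable (\<lambda>k. A n k * x k)"
  by (simp add: lA_iff)

lemma lA_summable_row_sum: "x \<in> lA A \<Longrightarrow> summable (\<lambda>n. norm (row_sum A n x))"
  by (simp add: lA_iff)

lemma row_partial_tendsto: "x \<in> lA A \<Longrightarrow> row_partial A n x \<longlonglongrightarrow> row_sum A n x"
  unfolding row_partial_def row_sum_def by (intro summable_LIMSEQ lA_summable_row)

lemma Bseq_row_partial: "x \<in> lA A \<Longrightarrow> Bseq (row_partial A n x)"
  using row_partial_tendsto convergent_def convergent_imp_Bseq by blast

lemma row_partial_add: "row_partial A n (\<lambda>k. x k + y k) = (\<lambda>m. row_partial A n x m + row_partial A n y m)"
  by (simp add: fun_eq_iff row_partial_def distrib_left sum.distrib)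

lemma row_partial_scale: "row_partial A n (\<lambda>k. c * x k) = (\<lambda>m. c * row_partial A n x m)"
  by (simp add: fun_eq_iff row_partial_def sum_distrib_left mult.left_commute)

lemma row_partial_diff: "row_partial A n (\<lambda>k. x k - y k) = (\<lambda>m. row_partial A n x m - row_partial A n y m)"
  by (simp add: fun_eq_iff row_partial_def right_diff_distrib sum_subtractf)

lemma row_sum_add:
  "x \<in> lA A \<Longrightarrow> y \<in> lA A \<Longrightarrow> row_sum A n (\<lambda>k. x k + y k) = row_sum A n x + row_sum A n y"
  unfolding row_sum_def using lA_summable_row[of x A n] lA_summable_row[of y A n]
  by (simp add: distrib_left suminf_add)

lemma row_sum_scale: "x \<in> lA A \<Longrightarrow> row_sum A n (\<lambda>k. c * x k) = c * row_sum A n x"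
  unfolding row_sum_def using lA_summable_row[of x A n]
  by (simp add: mult.left_commute suminf_mult)

lemma row_sum_diff:
  "x \<in> lA A \<Longrightarrow> y \<in> lA A \<Longrightarrow> row_sum A n (\<lambda>k. x k - y k) = row_sum A n x - row_sum A n y"
  unfolding row_sum_def using lA_summable_row[of x A n] lA_summable_row[of y A n]
  by (simp add: right_diff_distrib suminf_diff)

lemma lA_add: assumes "x \<in> lA A" "y \<in> lA A" shows "(\<lambda>k. x k + y k) \<in> lA A"
  using summable_add[OF lA_summable_row[OF assms(1)] lA_summable_row[OF assms(2)]]
    summable_norm_add[OF lA_summable_row_sum[OF assms(1)] lA_summable_row_sum[OF assms(2)]]
  by (simp add: lA_iff row_sum_add[OF assms] distrib_left)

lemma lA_scale: assumes "x \<in> lA A" shows "(\<lambda>k. c * x k) \<in> lA A"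
  using summable_mult[OF lA_summable_row[OF assms], of c]
    summable_mult[OF lA_summable_row_sum[OF assms], of "norm c"]
  by (simp add: lA_iff row_sum_scale[OF assms] norm_mult mult.left_commute)

lemma lA_diff: "x \<in> lA A \<Longrightarrow> y \<in> lA A \<Longrightarrow> (\<lambda>k. x k - y k) \<in> lA A"
  using lA_add[OF _ lA_scale, of x A y "-1"] by simp

lemma lA_zero: "(\<lambda>k. 0) \<in> lA A"
  by (simp add: lA_iff row_sum_def)

lemma lA_seminorm_nonneg: "x \<in> lA A \<Longrightarrow> 0 \<le> lA_seminorm A N x"
  unfolding lA_seminorm_def
  by (intro add_nonneg_nonneg sum_nonneg l1_norm_nonneg sup_norm_nonneg
      lA_summable_row_sum Bseq_row_partial) auto

lemma lA_seminorm_add: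
  assumes "x \<in> lA A" "y \<in> lA A"
  shows "lA_seminorm A N (\<lambda>k. x k + y k) \<le> lA_seminorm A N x + lA_seminorm A N y"
proof -
  have "(\<Sum>j<N. norm (x j + y j)) \<le> (\<Sum>j<N. norm (x j)) + (\<Sum>j<N. norm (y j))"
    by (simp add: sum.distrib[symmetric] sum_mono norm_triangle_ineq)
  moreover have "l1_norm (\<lambda>n. row_sum A n (\<lambda>k. x k + y k))
      \<le> l1_norm (\<lambda>n. row_sum A n x) + l1_norm (\<lambda>n. row_sum A n y)"
    unfolding row_sum_add[OF assms] by (intro l1_norm_add lA_summable_row_sum assms)
  moreover have "(\<Sum>n<N. sup_norm (row_partial A n (\<lambda>k. x k + y k)))
      \<le> (\<Sum>n<N. sup_norm (row_partial A n x)) + (\<Sum>n<N. sup_norm (row_partial A n y))"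
    unfolding row_partial_add sum.distrib[symmetric]
    by (intro sum_mono sup_norm_add Bseq_row_partial assms)
  ultimately show ?thesis unfolding lA_seminorm_def by linarith
qed

lemma lA_seminorm_scale:
  "x \<in> lA A \<Longrightarrow> lA_seminorm A N (\<lambda>k. c * x k) = norm c * lA_seminorm A N x"
  unfolding lA_seminorm_def row_partial_scale
  by (simp add: row_sum_scale l1_norm_scale lA_summable_row_sum sup_norm_scale Bseq_row_partial
      norm_mult sum_distrib_left distrib_left)

lemma lA_seminorm_zero [simp]: "lA_seminorm A N (\<lambda>k. 0) = 0"
  using lA_seminorm_scale[OF lA_zero, of A N 0] by simp

lemma lA_seminorm_minus_commute:
  "x \<in> lA A \<Longrightarrow> y \<in> lA A \<Longrightarrow> lA_seminorm A N (\<lambda>k. x k - y k) = lA_seminorm A N (\<lambda>k. y k - x k)"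
  using lA_seminorm_scale[OF lA_diff, of y A x N "-1"] by simp

lemma lA_seminorm_mono:
  assumes "x \<in> lA A" "N \<le> M"
  shows "lA_seminorm A N x \<le> lA_seminorm A M x"
proof -
  have "(\<Sum>j<N. norm (x j)) \<le> (\<Sum>j<M. norm (x j))"
    using assms(2) by (intro sum_mono2) auto
  moreover have "(\<Sum>n<N. sup_norm (row_partial A n x)) \<le> (\<Sum>n<M. sup_norm (row_partial A n x))"
    using assms by (intro sum_mono2 sup_norm_nonneg Bseq_row_partial) auto
  ultimately show ?thesis unfolding lA_seminorm_def by linarith
qed

lemma lA_seminorm_bounds:
  assumes "x \<in> lA A"
  shows lA_seminorm_ge_coords: "(\<Sum>j<N. norm (x j)) \<le> lA_seminorm A N x"
    and lA_seminorm_ge_l1: "l1_norm (\<lambda>n. row_sum A n x) \<le> lA_seminorm A N x"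
    and lA_seminorm_ge_sup: "n < N \<Longrightarrow> sup_norm (row_partial A n x) \<le> lA_seminorm A N x"
proof -
  have parts: "0 \<le> (\<Sum>j<N. norm (x j))" "0 \<le> l1_norm (\<lambda>n. row_sum A n x)"
    "0 \<le> (\<Sum>n<N. sup_norm (row_partial A n x))"
    by (auto intro!: sum_nonneg l1_norm_nonneg sup_norm_nonneg lA_summable_row_sum
        Bseq_row_partial assms)
  then show "(\<Sum>j<N. norm (x j)) \<le> lA_seminorm A N x" "l1_norm (\<lambda>n. row_sum A n x) \<le> lA_seminorm A N x"
    unfolding lA_seminorm_def by linarith+
  assume "n < N"
  then have "sup_norm (row_partial A n x) \<le> (\<Sum>n<N. sup_norm (row_partial A n x))"
    by (intro member_le_sum sup_norm_nonneg Bseq_row_partial assms) auto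
  with parts show "sup_norm (row_partial A n x) \<le> lA_seminorm A N x"
    unfolding lA_seminorm_def by linarith
qed

lemma lA_seminorm_ge_coord: "x \<in> lA A \<Longrightarrow> j < N \<Longrightarrow> norm (x j) \<le> lA_seminorm A N x"
  by (rule order_trans[OF member_le_sum lA_seminorm_ge_coords]) auto

definition lA_linear :: "cmatrix \<Rightarrow> (seq \<Rightarrow> complex) \<Rightarrow> bool" where
  "lA_linear A f \<longleftrightarrow> (\<forall>x\<in>lA A. \<forall>y\<in>lA A. f (\<lambda>k. x k + y k) = f x + f y)
     \<and> (\<forall>x\<in>lA A. \<forall>c. f (\<lambda>k. c * x k) = c * f x)"

definition lA_bounded :: "cmatrix \<Rightarrow> (seq \<Rightarrow> complex) \<Rightarrow> bool" where
  "lA_bounded A f \<longleftrightarrow> (\<exists>C N. \<forall>x\<in>lA A. norm (f x) \<le> C * lA_seminorm A N x)"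

lemma lA_linearD:
  "lA_linear A f \<Longrightarrow> x \<in> lA A \<Longrightarrow> y \<in> lA A \<Longrightarrow> f (\<lambda>k. x k + y k) = f x + f y"
  "lA_linear A f \<Longrightarrow> x \<in> lA A \<Longrightarrow> f (\<lambda>k. c * x k) = c * f x"
  by (simp_all add: lA_linear_def)

lemma lA_linear_diff:
  assumes "lA_linear A f" "x \<in> lA A" "y \<in> lA A"
  shows "f (\<lambda>k. x k - y k) = f x - f y"
  using lA_linearD(1)[OF assms(1) lA_diff[OF assms(2,3)] assms(3)] by simp

lemma lA_boundedE:
  assumes "lA_bounded A f"
  obtains C N where "C > 0" "\<And>x. x \<in> lA A \<Longrightarrow> norm (f x) \<le> C * lA_seminorm A N x"
proof -
  obtain C N where CN: "\<forall>x\<in>lA A. norm (f x) \<le> C * lA_seminorm A N x"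
    using assms by (auto simp: lA_bounded_def)
  have "norm (f x) \<le> (\<bar>C\<bar> + 1) * lA_seminorm A N x" if "x \<in> lA A" for x
    using CN that lA_seminorm_nonneg[OF that, of N]
    by (meson abs_ge_self less_add_one less_imp_le mult_right_mono order_trans)
  then show ?thesis by (intro that[of "\<bar>C\<bar> + 1"]) auto
qed

lemma lA_bounded_add:
  assumes "lA_bounded A f" "lA_bounded A g"
  shows "lA_bounded A (\<lambda>x. f x + g x)"
proof -
  obtain C N C' N' where C: "C > 0" "\<And>x. x \<in> lA A \<Longrightarrow> norm (f x) \<le> C * lA_seminorm A N x"
    and C': "C' > 0" "\<And>x. x \<in> lA A \<Longrightarrow> norm (g x) \<le> C' * lA_seminorm A N' x"
    using assms by (metis lA_boundedE)
  have "norm (f x + g x) \<le> (C + C') * lA_seminorm A (max N N') x" if x: "x \<in> lA A" for x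
  proof -
    have "C * lA_seminorm A N x \<le> C * lA_seminorm A (max N N') x"
      "C' * lA_seminorm A N' x \<le> C' * lA_seminorm A (max N N') x"
      using C(1) C'(1) by (auto intro!: mult_left_mono lA_seminorm_mono x)
    then show ?thesis
      using norm_triangle_ineq[of "f x" "g x"] C(2)[OF x] C'(2)[OF x] by (simp add: distrib_right)
  qed
  then show ?thesis unfolding lA_bounded_def by blast
qed

lemma lA_bounded_sum:
  fixes M :: nat
  shows "(\<And>n. lA_bounded A (f n)) \<Longrightarrow> lA_bounded A (\<lambda>x. \<Sum>n<M. f n x)"
proof (induction M)
  case 0
  then show ?case by (auto simp: lA_bounded_def intro: exI[of _ 0])
next
  case (Suc M)
  then show ?case by (simp add: lA_bounded_add)
qed

lemma lA_bounded_finite_combination: "lA_bounded A (\<lambda>x. \<Sum>k<m. c k * x k)"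
proof -
  have "norm (\<Sum>k<m. c k * x k) \<le> (\<Sum>k<m. norm (c k)) * lA_seminorm A m x" if x: "x \<in> lA A" for x
  proof -
    have "norm (\<Sum>k<m. c k * x k) \<le> (\<Sum>k<m. norm (c k) * norm (x k))"
      by (rule order_trans[OF norm_sum]) (simp add: norm_mult)
    also have "\<dots> \<le> (\<Sum>k<m. norm (c k) * lA_seminorm A m x)"
      by (intro sum_mono mult_left_mono lA_seminorm_ge_coord[OF x]) auto
    finally show ?thesis by (simp add: sum_distrib_right)
  qed
  then show ?thesis unfolding lA_bounded_def by blast
qed

lemma seminorm_lA_eq:
  "seminorm_lA A (Coord j) x = norm (x j)"
  "seminorm_lA A Total x = l1_norm (\<lambda>n. row_sum A n x)"
  "seminorm_lA A (Row n) x = sup_norm (row_partial A n x)"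
  by (simp_all add: seminorm_lA_def l1_norm_def row_sum_def sup_norm_def row_partial_def)

lemma lA_seminorm_less:
  assumes "\<forall>i\<in>Coord ` {..<N} \<union> {Total} \<union> Row ` {..<N}. seminorm_lA A i x < d"
  shows "lA_seminorm A N x < (2 * real N + 1) * d"
proof -
  have "norm (x j) < d" if "j < N" for j
    using assms[rule_format, of "Coord j"] that by (simp add: seminorm_lA_eq)
  moreover have "sup_norm (row_partial A n x) < d" if "n < N" for n
    using assms[rule_format, of "Row n"] that by (simp add: seminorm_lA_eq)
  ultimately have "(\<Sum>j<N. norm (x j)) \<le> (\<Sum>j<N. d)" "(\<Sum>n<N. sup_norm (row_partial A n x)) \<le> (\<Sum>n<N. d)"
    by (meson lessThan_iff less_imp_le sum_mono)+
  moreover have "l1_norm (\<lambda>n. row_sum A n x) < d"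
    using assms[rule_format, of Total] by (simp add: seminorm_lA_eq)
  ultimately show ?thesis
    unfolding lA_seminorm_def by (simp add: algebra_simps)
qed

lemma lA_linear_bounded_in_dual:
  assumes lin: "lA_linear A f" and bnd: "lA_bounded A f"
  shows "f \<in> lA_dual A"
proof -
  obtain C N where C: "C > 0" and fC: "\<And>x. x \<in> lA A \<Longrightarrow> norm (f x) \<le> C * lA_seminorm A N x"
    using lA_boundedE[OF bnd] by blast
  define S where "S = Coord ` {..<N} \<union> {Total} \<union> Row ` {..<N}"
  have "norm (f y - f x) < e"
    if x: "x \<in> lA A" and y: "y \<in> lA A"
      and small: "\<forall>i\<in>S. seminorm_lA A i (\<lambda>k. y k - x k) < e / C / (2 * real N + 1)" for x y e
  proof -
    have "lA_seminorm A N (\<lambda>k. y k - x k) < (2 * real N + 1) * (e / C / (2 * real N + 1))"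
      by (rule lA_seminorm_less[OF small[unfolded S_def]])
    also have "\<dots> = e / C" by simp
    finally have "lA_seminorm A N (\<lambda>k. y k - x k) < e / C" .
    then have "C * lA_seminorm A N (\<lambda>k. y k - x k) < e"
      using C by (simp add: pos_less_divide_eq mult.commute)
    then show ?thesis
      using fC[OF lA_diff[OF y x]] lA_linear_diff[OF lin y x] by simp
  qed
  moreover have "finite S" "e / C / (2 * real N + 1) > 0" if "e > 0" for e
    using C that by (auto simp: S_def)
  ultimately have "\<exists>S d. finite S \<and> d > 0 \<and> (\<forall>y\<in>lA A.
      (\<forall>i\<in>S. seminorm_lA A i (\<lambda>k. y k - x k) < d) \<longrightarrow> norm (f y - f x) < e)"
    if "x \<in> lA A" "e > 0" for x e
    using that by blast
  with lin show ?thesis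
    unfolding lA_dual_def lA_linear_def by blast
qed

section \<open>The Frechet metric of l_A and uniform boundedness\<close>

text \<open>Outside l_A the distance is set to 0, because \<open>Metric_space\<close> demands nonnegativity and
  symmetry for all arguments.\<close>
definition lA_dist :: "cmatrix \<Rightarrow> seq \<Rightarrow> seq \<Rightarrow> real" where
  "lA_dist A x y = (if x \<in> lA A \<and> y \<in> lA A
     then \<Sum>N. (1/2)^N * min 1 (lA_seminorm A N (\<lambda>k. x k - y k)) else 0)"

lemma lA_dist_summable:
  assumes "x \<in> lA A" "y \<in> lA A"
  shows "summable (\<lambda>N. (1/2::real)^N * min 1 (lA_seminorm A N (\<lambda>k. x k - y k)))"
proof (rule summable_comparison_test'[OF summable_geometric[of "1/2::real"]])
  show "norm ((1/2::real)^N * min 1 (lA_seminorm A N (\<lambda>k. x k - y k))) \<le> (1/2)^N" for N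
    using lA_seminorm_nonneg[OF lA_diff[OF assms], of N] by (simp add: abs_mult mult_left_le)
qed simp

lemma lA_dist_ge_term:
  assumes "x \<in> lA A" "y \<in> lA A"
  shows "(1/2)^N * min 1 (lA_seminorm A N (\<lambda>k. x k - y k)) \<le> lA_dist A x y"
  using sum_le_suminf[OF lA_dist_summable[OF assms], of "{N}"]
    lA_seminorm_nonneg[OF lA_diff[OF assms]] assms
  by (simp add: lA_dist_def)

lemma lA_seminorm_less_of_dist:
  assumes "x \<in> lA A" "y \<in> lA A" "lA_dist A x y < (1/2)^N * e" "e \<le> 1"
  shows "lA_seminorm A N (\<lambda>k. x k - y k) < e"
proof -
  have "(1/2)^N * min 1 (lA_seminorm A N (\<lambda>k. x k - y k)) < (1/2)^N * e"
    using lA_dist_ge_term[OF assms(1,2), of N] assms(3) by linarith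
  then show ?thesis using assms(4) by (simp add: min_def split: if_splits)
qed

lemma lA_dist_le:
  assumes x: "x \<in> lA A" and y: "y \<in> lA A"
  shows "lA_dist A x y \<le> 2 * lA_seminorm A N (\<lambda>k. x k - y k) + (1/2)^N"
proof -
  define P where "P M = lA_seminorm A M (\<lambda>k. x k - y k)" for M
  define t where "t M = (1/2::real)^M * min 1 (P M)" for M
  have P: "0 \<le> P M" "M \<le> N \<Longrightarrow> P M \<le> P N" for M
    unfolding P_def by (auto intro: lA_seminorm_nonneg lA_seminorm_mono lA_diff x y)
  have t: "summable t" unfolding t_def P_def by (rule lA_dist_summable[OF x y])
  have "(\<Sum>M<Suc N. t M) \<le> (\<Sum>M<Suc N. (1/2)^M) * P N"
    unfolding sum_distrib_right t_def using P by (intro sum_mono mult_left_mono) (auto intro!: min.coboundedI2)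
  also have "\<dots> \<le> 2 * P N"
    using sum_le_suminf[OF summable_geometric[of "1/2::real"], of "{..<Suc N}"] P(1)[of N]
    by (intro mult_right_mono) (auto simp: suminf_geometric)
  finally have head: "(\<Sum>M<Suc N. t M) \<le> 2 * P N" .
  have "(\<Sum>M. t (M + Suc N)) \<le> (\<Sum>M. (1/2)^M * (1/2)^Suc N)"
  proof (rule suminf_le)
    show "summable (\<lambda>M. t (M + Suc N))" using t by (rule summable_ignore_initial_segment)
    show "summable (\<lambda>M. (1/2::real)^M * (1/2)^Suc N)" by (intro summable_mult2 summable_geometric) simp
    show "t (M + Suc N) \<le> (1/2)^M * (1/2)^Suc N" for M
      unfolding t_def by (simp add: power_add mult_left_le)
  qed
  also have "\<dots> = (\<Sum>M. (1/2::real)^M) * (1/2)^Suc N"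
    by (rule suminf_mult2[symmetric]) (simp add: summable_geometric)
  also have "\<dots> = (1/2)^N" by (simp add: suminf_geometric)
  finally have tail: "(\<Sum>M. t (M + Suc N)) \<le> (1/2)^N" .
  have "lA_dist A x y = suminf t" using x y by (simp add: lA_dist_def t_def[abs_def] P_def)
  then show ?thesis
    using suminf_split_initial_segment[OF t, of "Suc N"] head tail unfolding P_def by linarith
qed

lemma lA_dist_eq_0_iff:
  assumes x: "x \<in> lA A" and y: "y \<in> lA A"
  shows "lA_dist A x y = 0 \<longleftrightarrow> x = y"
proof
  assume dist: "lA_dist A x y = 0"
  have "norm (x j - y j) \<le> 0" for j
  proof -
    define P where "P = lA_seminorm A (Suc j) (\<lambda>k. x k - y k)"
    have pos: "(0::real) < (1/2)^Suc j" by simp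
    have "(1/2)^Suc j * min 1 P \<le> 0"
      using lA_dist_ge_term[OF x y, of "Suc j"] dist by (simp add: P_def)
    then have "min 1 P \<le> 0" by (metis mult_le_cancel_left_pos mult_zero_right pos)
    then have "P \<le> 0" by (simp add: min_le_iff_disj)
    then show ?thesis
      using lA_seminorm_ge_coord[OF lA_diff[OF x y], of j "Suc j"] unfolding P_def by linarith
  qed
  then show "x = y" by auto
qed (simp add: lA_dist_def)

lemma lA_dist_triangle:
  assumes x: "x \<in> lA A" and y: "y \<in> lA A" and z: "z \<in> lA A"
  shows "lA_dist A x z \<le> lA_dist A x y + lA_dist A y z"
proof -
  define t where "t u v N = (1/2::real)^N * min 1 (lA_seminorm A N (\<lambda>k. u k - v k))" for u v N
  have "t x z N \<le> t x y N + t y z N" for N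
    using lA_seminorm_add[OF lA_diff[OF x y] lA_diff[OF y z], of N]
      lA_seminorm_nonneg[OF lA_diff[OF x y], of N] lA_seminorm_nonneg[OF lA_diff[OF y z], of N]
    unfolding t_def distrib_left[symmetric] by (intro mult_left_mono) auto
  then have "suminf (t x z) \<le> suminf (\<lambda>N. t x y N + t y z N)"
    unfolding t_def by (intro suminf_le summable_add lA_dist_summable x y z)
  also have "\<dots> = suminf (t x y) + suminf (t y z)"
    unfolding t_def by (intro suminf_add[symmetric] lA_dist_summable x y z)
  finally show ?thesis
    using x y z by (simp add: lA_dist_def t_def[abs_def])
qed

lemma Metric_space_lA: "Metric_space (lA A) (lA_dist A)"
proof
  fix x y
  show "0 \<le> lA_dist A x y"
    unfolding lA_dist_def using lA_dist_summable[of x A y] lA_seminorm_nonneg[OF lA_diff, of x A y]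
    by (auto intro!: suminf_nonneg)
  show "lA_dist A x y = lA_dist A y x"
    unfolding lA_dist_def using lA_seminorm_minus_commute[of x A y] by auto
qed (simp_all add: lA_dist_eq_0_iff lA_dist_triangle)

interpretation lA_metric: Metric_space "lA A" "lA_dist A" for A
  by (rule Metric_space_lA)

lemma lA_limitin_iff:
  "limitin (lA_metric.mtopology A) s x sequentially \<longleftrightarrow>
     x \<in> lA A \<and> (\<forall>\<^sub>F i in sequentially. s i \<in> lA A)
     \<and> (\<forall>N. (\<lambda>i. lA_seminorm A N (\<lambda>k. s i k - x k)) \<longlonglongrightarrow> 0)"
proof -
  have "(\<lambda>i. lA_dist A (s i) x) \<longlonglongrightarrow> 0 \<longleftrightarrow> (\<forall>N. (\<lambda>i. lA_seminorm A N (\<lambda>k. s i k - x k)) \<longlonglongrightarrow> 0)"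
    if x: "x \<in> lA A" and s: "\<forall>\<^sub>F i in sequentially. s i \<in> lA A"
  proof
    assume dist: "(\<lambda>i. lA_dist A (s i) x) \<longlonglongrightarrow> 0"
    show "\<forall>N. (\<lambda>i. lA_seminorm A N (\<lambda>k. s i k - x k)) \<longlonglongrightarrow> 0"
    proof (intro allI tendsto_zero_if_eventually_le)
      fix N
      show "\<forall>\<^sub>F i in sequentially. 0 \<le> lA_seminorm A N (\<lambda>k. s i k - x k)"
        using s by eventually_elim (intro lA_seminorm_nonneg lA_diff x)
      fix e :: real assume "e > 0"
      then have "\<forall>\<^sub>F i in sequentially. lA_dist A (s i) x < (1/2)^N * min e 1"
        using dist by (intro order_tendstoD(2)) auto
      with s show "\<forall>\<^sub>F i in sequentially. lA_seminorm A N (\<lambda>k. s i k - x k) \<le> e"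
        by eventually_elim (use lA_seminorm_less_of_dist x in fastforce)
    qed
  next
    assume P: "\<forall>N. (\<lambda>i. lA_seminorm A N (\<lambda>k. s i k - x k)) \<longlonglongrightarrow> 0"
    show "(\<lambda>i. lA_dist A (s i) x) \<longlonglongrightarrow> 0"
    proof (rule tendsto_zero_if_eventually_le)
      show "\<forall>\<^sub>F i in sequentially. 0 \<le> lA_dist A (s i) x" by simp
      fix e :: real assume "e > 0"
      then obtain N where N: "(1/2::real)^N < e / 2" using real_arch_pow_inv[of "e/2" "1/2"] by auto
      have "\<forall>\<^sub>F i in sequentially. lA_seminorm A N (\<lambda>k. s i k - x k) < e / 4"
        using P \<open>e > 0\<close> by (intro order_tendstoD(2)) auto
      with s show "\<forall>\<^sub>F i in sequentially. lA_dist A (s i) x \<le> e"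
        by eventually_elim (use lA_dist_le[OF _ x, where N=N] N in fastforce)
    qed
  qed
  then show ?thesis by (auto simp: lA_metric.limitin_metric_dist_null)
qed

locale lA_Cauchy =
  fixes A :: cmatrix and s :: "nat \<Rightarrow> seq"
  assumes s_lA: "\<And>i. s i \<in> lA A"
    and Cauchy_seminorm: "\<And>N e. e > 0 \<Longrightarrow> \<exists>I. \<forall>i\<ge>I. \<forall>l\<ge>I. lA_seminorm A N (\<lambda>k. s i k - s l k) < e"
begin

definition limit :: seq where
  "limit j = lim (\<lambda>i. s i j)"

lemma diff_lA: "(\<lambda>k. s i k - s l k) \<in> lA A"
  by (intro lA_diff s_lA)

lemma coord_tendsto: "(\<lambda>i. s i j) \<longlonglongrightarrow> limit j"
proof -
  have "Cauchy (\<lambda>i. s i j)"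
  proof (rule CauchyI)
    fix e :: real assume "e > 0"
    then obtain I where "\<forall>i\<ge>I. \<forall>l\<ge>I. lA_seminorm A (Suc j) (\<lambda>k. s i k - s l k) < e"
      using Cauchy_seminorm by blast
    then show "\<exists>I. \<forall>i\<ge>I. \<forall>l\<ge>I. norm (s i j - s l j) < e"
      using lA_seminorm_ge_coord[OF diff_lA, of j "Suc j"] by (meson le_less_trans lessI)
  qed
  then show ?thesis by (simp add: limit_def Cauchy_convergent_iff convergent_LIMSEQ_iff)
qed

lemma row_partial_uniform:
  assumes "e > 0"
  shows "\<exists>I. \<forall>i\<ge>I. \<forall>m. norm (row_partial A n (s i) m - row_partial A n limit m) \<le> e"
proof -
  obtain I where I: "\<forall>i\<ge>I. \<forall>l\<ge>I. lA_seminorm A (Suc n) (\<lambda>k. s i k - s l k) < e"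
    using Cauchy_seminorm assms by blast
  have "norm (row_partial A n (s i) m - row_partial A n limit m) \<le> e" if "i \<ge> I" for i m
  proof (rule Lim_bounded)
    show "(\<lambda>l. norm (row_partial A n (s i) m - row_partial A n (s l) m))
        \<longlonglongrightarrow> norm (row_partial A n (s i) m - row_partial A n limit m)"
      unfolding row_partial_def by (intro tendsto_intros coord_tendsto)
    have "norm (row_partial A n (s i) m - row_partial A n (s l) m) \<le> e" if "l \<ge> I" for l
    proof -
      have "norm (row_partial A n (\<lambda>k. s i k - s l k) m) \<le> sup_norm (row_partial A n (\<lambda>k. s i k - s l k))"
        by (intro sup_norm_upper Bseq_row_partial diff_lA)
      also have "\<dots> \<le> lA_seminorm A (Suc n) (\<lambda>k. s i k - s l k)"
        by (intro lA_seminorm_ge_sup diff_lA) simp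
      also have "\<dots> < e" using I \<open>i \<ge> I\<close> that by blast
      finally show ?thesis by (simp add: row_partial_diff)
    qed
    then show "\<forall>l\<ge>I. norm (row_partial A n (s i) m - row_partial A n (s l) m) \<le> e" by blast
  qed
  then show ?thesis by blast
qed

lemma row_sum_Cauchy: "Cauchy (\<lambda>i. row_sum A n (s i))"
proof (rule CauchyI)
  fix e :: real assume "e > 0"
  then obtain I where "\<forall>i\<ge>I. \<forall>l\<ge>I. lA_seminorm A 0 (\<lambda>k. s i k - s l k) < e"
    using Cauchy_seminorm by blast
  moreover have "norm (row_sum A n (s i) - row_sum A n (s l)) \<le> lA_seminorm A 0 (\<lambda>k. s i k - s l k)" for i l
    using order_trans[OF norm_le_l1_norm[OF lA_summable_row_sum[OF diff_lA[of i l]]]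
        lA_seminorm_ge_l1[OF diff_lA[of i l], where N=0]]
    by (simp add: row_sum_diff s_lA)
  ultimately show "\<exists>I. \<forall>i\<ge>I. \<forall>l\<ge>I. norm (row_sum A n (s i) - row_sum A n (s l)) < e"
    by (meson le_less_trans)
qed

text \<open>Exchange of the limits \<open>i \<rightarrow> \<infinity>\<close> and \<open>m \<rightarrow> \<infinity>\<close>, legitimate because the row partial
  sums converge uniformly in \<open>m\<close>.\<close>
lemma limit_row_sums: "(\<lambda>k. A n k * limit k) sums lim (\<lambda>i. row_sum A n (s i))"
proof -
  have "row_partial A n limit \<longlonglongrightarrow> lim (\<lambda>i. row_sum A n (s i))"
  proof (rule swap_uniform_limit'[where f="\<lambda>i. row_partial A n (s i)" and F=sequentially])
    show "\<forall>\<^sub>F i in sequentially. row_partial A n (s i) \<longlonglongrightarrow> row_sum A n (s i)"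
      by (intro always_eventually allI row_partial_tendsto s_lA)
    show "(\<lambda>i. row_sum A n (s i)) \<longlonglongrightarrow> lim (\<lambda>i. row_sum A n (s i))"
      using row_sum_Cauchy by (simp add: Cauchy_convergent_iff convergent_LIMSEQ_iff)
    show "uniform_limit UNIV (\<lambda>i. row_partial A n (s i)) (row_partial A n limit) sequentially"
      unfolding uniform_limit_sequentially_iff dist_norm
    proof (intro allI impI)
      fix e :: real assume "e > 0"
      then obtain I where I: "\<forall>i\<ge>I. \<forall>m. norm (row_partial A n (s i) m - row_partial A n limit m) \<le> e / 2"
        using row_partial_uniform[of "e / 2"] by auto
      have "norm (row_partial A n (s i) m - row_partial A n limit m) < e" if "i \<ge> I" for i m
        using I[rule_format, OF that, of m] \<open>e > 0\<close> by linarith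
      then show "\<exists>I. \<forall>i\<ge>I. \<forall>m\<in>UNIV. norm (row_partial A n (s i) m - row_partial A n limit m) < e"
        by blast
    qed
  qed auto
  then show ?thesis by (simp add: sums_def row_partial_def[abs_def])
qed

lemma row_sum_tendsto: "(\<lambda>i. row_sum A n (s i)) \<longlonglongrightarrow> row_sum A n limit"
  using limit_row_sums row_sum_Cauchy
  by (simp add: sums_iff row_sum_def Cauchy_convergent_iff convergent_LIMSEQ_iff)

lemma l1_distance_small:
  assumes "e > 0"
  shows "\<exists>I. \<forall>i\<ge>I. summable (\<lambda>n. norm (row_sum A n (s i) - row_sum A n limit))
    \<and> (\<Sum>n. norm (row_sum A n (s i) - row_sum A n limit)) \<le> e"
proof -
  obtain I where I: "\<forall>i\<ge>I. \<forall>l\<ge>I. lA_seminorm A 0 (\<lambda>k. s i k - s l k) < e"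
    using Cauchy_seminorm assms by blast
  have partial: "(\<Sum>n<K. norm (row_sum A n (s i) - row_sum A n limit)) \<le> e" if "i \<ge> I" for i K
  proof (rule Lim_bounded)
    show "(\<lambda>l. \<Sum>n<K. norm (row_sum A n (s i) - row_sum A n (s l)))
        \<longlonglongrightarrow> (\<Sum>n<K. norm (row_sum A n (s i) - row_sum A n limit))"
      by (intro tendsto_intros row_sum_tendsto)
    have "(\<Sum>n<K. norm (row_sum A n (s i) - row_sum A n (s l))) \<le> e" if "l \<ge> I" for l
      using sum_le_suminf[OF lA_summable_row_sum[OF diff_lA[of i l]], of "{..<K}"]
        lA_seminorm_ge_l1[OF diff_lA[of i l], where N=0] I \<open>i \<ge> I\<close> that
      by (fastforce simp: row_sum_diff s_lA l1_norm_def)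
    then show "\<forall>l\<ge>I. (\<Sum>n<K. norm (row_sum A n (s i) - row_sum A n (s l))) \<le> e" by blast
  qed
  have "summable (\<lambda>n. norm (row_sum A n (s i) - row_sum A n limit))" if "i \<ge> I" for i
    using partial[OF that] by (intro summableI_nonneg_bounded) auto
  with partial show ?thesis by (meson suminf_le_const)
qed

lemma limit_lA: "limit \<in> lA A"
proof -
  obtain I where "summable (\<lambda>n. norm (row_sum A n (s I) - row_sum A n limit))"
    using l1_distance_small[of 1] by auto
  then have "summable (\<lambda>n. norm (row_sum A n (s I)) + norm (row_sum A n (s I) - row_sum A n limit))"
    by (intro summable_add lA_summable_row_sum s_lA)
  then have "summable (\<lambda>n. norm (row_sum A n limit))"
    by (rule summable_comparison_test'[of _ 0]) (simp, metis norm_minus_commute norm_triangle_sub)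
  with limit_row_sums show ?thesis by (auto simp: lA_iff sums_iff)
qed

lemma seminorm_tendsto_zero: "(\<lambda>i. lA_seminorm A N (\<lambda>k. s i k - limit k)) \<longlonglongrightarrow> 0"
proof -
  have e: "(\<lambda>k. s i k - limit k) \<in> lA A" for i by (intro lA_diff s_lA limit_lA)
  have coords: "(\<lambda>i. \<Sum>j<N. norm (s i j - limit j)) \<longlonglongrightarrow> 0"
    by (intro tendsto_null_sum tendsto_norm_zero LIM_zero coord_tendsto)
  have l1: "(\<lambda>i. l1_norm (\<lambda>n. row_sum A n (\<lambda>k. s i k - limit k))) \<longlonglongrightarrow> 0"
  proof (rule tendsto_zero_if_eventually_le)
    show "\<forall>\<^sub>F i in sequentially. 0 \<le> l1_norm (\<lambda>n. row_sum A n (\<lambda>k. s i k - limit k))"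
      by (intro always_eventually allI l1_norm_nonneg lA_summable_row_sum e)
    show "\<forall>\<^sub>F i in sequentially. l1_norm (\<lambda>n. row_sum A n (\<lambda>k. s i k - limit k)) \<le> e" if "e > 0" for e
      using l1_distance_small[OF that]
      by (auto simp: eventually_sequentially l1_norm_def row_sum_diff s_lA limit_lA)
  qed
  have sup: "(\<lambda>i. sup_norm (row_partial A n (\<lambda>k. s i k - limit k))) \<longlonglongrightarrow> 0" for n
  proof (rule tendsto_zero_if_eventually_le)
    show "\<forall>\<^sub>F i in sequentially. 0 \<le> sup_norm (row_partial A n (\<lambda>k. s i k - limit k))"
      by (intro always_eventually allI sup_norm_nonneg Bseq_row_partial e)
    show "\<forall>\<^sub>F i in sequentially. sup_norm (row_partial A n (\<lambda>k. s i k - limit k)) \<le> e" if "e > 0" for e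
      using row_partial_uniform[OF that, of n]
      by (auto simp: eventually_sequentially row_partial_diff intro!: sup_norm_least)
  qed
  show ?thesis
    unfolding lA_seminorm_def by (intro tendsto_add_zero tendsto_null_sum coords l1 sup)
qed

end

lemma lA_mcomplete: "lA_metric.mcomplete A"
  unfolding lA_metric.mcomplete_def
proof (intro allI impI)
  fix s assume "lA_metric.MCauchy A s"
  then have s: "\<And>i. s i \<in> lA A"
    and cauchy: "\<And>\<epsilon>. \<epsilon> > 0 \<Longrightarrow> \<exists>I. \<forall>i l. I \<le> i \<longrightarrow> I \<le> l \<longrightarrow> lA_dist A (s i) (s l) < \<epsilon>"
    by (auto simp: lA_metric.MCauchy_def)
  have cauchy_seminorms: "\<exists>I. \<forall>i\<ge>I. \<forall>l\<ge>I. lA_seminorm A N (\<lambda>k. s i k - s l k) < e"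
    if "e > 0" for N e
  proof -
    have "(1/2::real)^N * min e 1 > 0" using that by simp
    then obtain I where I: "\<forall>i l. I \<le> i \<longrightarrow> I \<le> l \<longrightarrow> lA_dist A (s i) (s l) < (1/2)^N * min e 1"
      using cauchy by blast
    have "lA_seminorm A N (\<lambda>k. s i k - s l k) < e" if "I \<le> i" "I \<le> l" for i l
    proof -
      have "lA_seminorm A N (\<lambda>k. s i k - s l k) < min e 1"
        by (rule lA_seminorm_less_of_dist[OF s s]) (use I that in auto)
      then show ?thesis by simp
    qed
    then show ?thesis by blast
  qed
  then interpret lA_Cauchy A s
    using s by unfold_locales auto
  show "\<exists>x. limitin (lA_metric.mtopology A) s x sequentially"
    using s limit_lA seminorm_tendsto_zero by (auto simp: lA_limitin_iff)
qed

lemma lA_bounded_tendsto: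
  assumes lin: "lA_linear A f" and bnd: "lA_bounded A f"
    and lim: "limitin (lA_metric.mtopology A) s x sequentially"
  shows "(\<lambda>i. f (s i)) \<longlonglongrightarrow> f x"
proof -
  obtain C N where C: "\<And>z. z \<in> lA A \<Longrightarrow> norm (f z) \<le> C * lA_seminorm A N z"
    using lA_boundedE[OF bnd] by blast
  have x: "x \<in> lA A" and s: "\<forall>\<^sub>F i in sequentially. s i \<in> lA A"
    and P: "(\<lambda>i. lA_seminorm A N (\<lambda>k. s i k - x k)) \<longlonglongrightarrow> 0"
    using lim by (auto simp: lA_limitin_iff)
  have "\<forall>\<^sub>F i in sequentially. norm (f (s i) - f x) \<le> C * lA_seminorm A N (\<lambda>k. s i k - x k)"
    using s
  proof eventually_elim
    case (elim i)
    then show ?case using C[OF lA_diff[OF elim x]] lA_linear_diff[OF lin elim x] by simp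
  qed
  moreover have "(\<lambda>i. C * lA_seminorm A N (\<lambda>k. s i k - x k)) \<longlonglongrightarrow> 0"
    using tendsto_mult_right_zero[OF P] by simp
  ultimately have "(\<lambda>i. f (s i) - f x) \<longlonglongrightarrow> 0"
    by (rule Lim_null_comparison)
  then show ?thesis by (rule LIM_zero_cancel)
qed

lemma lA_bound_of_ball_bound:
  assumes lin: "lA_linear A f" and e: "e > 0"
    and ball: "\<And>z. z \<in> lA A \<Longrightarrow> lA_seminorm A N z < e \<Longrightarrow> norm (f z) \<le> B"
    and z: "z \<in> lA A"
  shows "norm (f z) \<le> 2 * B / e * lA_seminorm A N z"
proof -
  have scaled: "t * norm (f z) \<le> B" if "t > 0" "t * lA_seminorm A N z < e" for t :: real
    using ball[OF lA_scale[OF z, of "of_real t"]] that lA_linearD(2)[OF lin z]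
    by (simp add: lA_seminorm_scale[OF z] norm_mult)
  show ?thesis
  proof (cases "lA_seminorm A N z = 0")
    case True
    have "norm (f z) \<le> 0"
    proof (rule ccontr)
      assume "\<not> norm (f z) \<le> 0"
      then have "(\<bar>B\<bar> + 1) / norm (f z) * norm (f z) \<le> B"
        using e True by (intro scaled) auto
      with \<open>\<not> norm (f z) \<le> 0\<close> show False by simp
    qed
    with True show ?thesis by simp
  next
    case False
    then have P: "lA_seminorm A N z > 0" using lA_seminorm_nonneg[OF z, of N] by linarith
    have "e / (2 * lA_seminorm A N z) * norm (f z) \<le> B"
      using P e by (intro scaled) auto
    with P e show ?thesis by (simp add: field_simps)
  qed
qed

lemma closedin_lA_uniform_bound:
  assumes lin: "\<And>i. lA_linear A (f i)" and bnd: "\<And>i. lA_bounded A (f i)"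
  shows "closedin (lA_metric.mtopology A) {x \<in> lA A. \<forall>i. norm (f i x) \<le> B}"
  unfolding lA_metric.metric_closedin_iff_sequentially_closed
proof (intro conjI allI impI)
  fix \<sigma> l assume \<sigma>: "range \<sigma> \<subseteq> {x \<in> lA A. \<forall>i. norm (f i x) \<le> B}
    \<and> limitin (lA_metric.mtopology A) \<sigma> l sequentially"
  have "norm (f i l) \<le> B" for i
    using \<sigma> lA_bounded_tendsto[OF lin bnd, of \<sigma> l i]
    by (intro Lim_bounded[OF tendsto_norm, of _ _ 0]) auto
  with \<sigma> show "l \<in> {x \<in> lA A. \<forall>i. norm (f i x) \<le> B}" by (auto simp: lA_limitin_iff)
qed auto

lemma lA_Baire:
  fixes G :: "nat \<Rightarrow> seq set"
  assumes closed: "\<And>m. closedin (lA_metric.mtopology A) (G m)" and cover: "\<Union>(range G) = lA A"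
  obtains m x0 r where "r > 0" "x0 \<in> G m" "lA_metric.mball A x0 r \<subseteq> G m"
proof -
  have "lA_metric.mtopology A interior_of \<Union>(range G) \<noteq> {}"
    using cover lA_zero[of A] interior_of_topspace[of "lA_metric.mtopology A"] by auto
  moreover have "countable (range G)" by simp
  ultimately obtain m where "lA_metric.mtopology A interior_of G m \<noteq> {}"
    using lA_metric.metric_Baire_category_alt[where A=A, OF lA_mcomplete] closed by blast
  then obtain x0 where x0: "x0 \<in> lA_metric.mtopology A interior_of G m" by blast
  moreover have "openin (lA_metric.mtopology A) (lA_metric.mtopology A interior_of G m)" by simp
  ultimately obtain r where "r > 0" "lA_metric.mball A x0 r \<subseteq> lA_metric.mtopology A interior_of G m"
    unfolding lA_metric.openin_mtopology by blast
  with x0 show ?thesis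
    using interior_of_subset[of "lA_metric.mtopology A" "G m"] that by blast
qed

lemma lA_mball_contains_seminorm_ball:
  assumes x0: "x0 \<in> lA A" and r: "r > 0"
  obtains N where "\<And>z. z \<in> lA A \<Longrightarrow> lA_seminorm A N z < r / 4 \<Longrightarrow>
    (\<lambda>k. x0 k + z k) \<in> lA_metric.mball A x0 r"
proof -
  obtain N where N: "(1/2::real)^N < r / 2" using real_arch_pow_inv[of "r/2" "1/2"] r by auto
  have "(\<lambda>k. x0 k + z k) \<in> lA_metric.mball A x0 r" if z: "z \<in> lA A" "lA_seminorm A N z < r / 4" for z
  proof -
    have y: "(\<lambda>k. x0 k + z k) \<in> lA A" by (rule lA_add[OF x0 z(1)])
    have "lA_seminorm A N (\<lambda>k. x0 k - (x0 k + z k)) = lA_seminorm A N z"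
      using lA_seminorm_scale[OF z(1), of N "-1"] by simp
    then have "lA_dist A x0 (\<lambda>k. x0 k + z k) < r" using lA_dist_le[OF x0 y, of N] N z(2) by linarith
    then show ?thesis using x0 y by simp
  qed
  then show ?thesis using that by blast
qed

lemma lA_uniform_boundedness:
  assumes lin: "\<And>i. lA_linear A (f i)" and bnd: "\<And>i. lA_bounded A (f i)"
    and pointwise: "\<And>x. x \<in> lA A \<Longrightarrow> \<exists>B. \<forall>i. norm (f i x) \<le> B"
  shows "\<exists>C N. \<forall>i. \<forall>x\<in>lA A. norm (f i x) \<le> C * lA_seminorm A N x"
proof -
  define G where "G m = {x \<in> lA A. \<forall>i. norm (f i x) \<le> real m}" for m :: nat
  have "x \<in> \<Union>(range G)" if x: "x \<in> lA A" for x
  proof -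
    obtain B where "\<forall>i. norm (f i x) \<le> B" using pointwise[OF x] by blast
    then have "x \<in> G (nat \<lceil>B\<rceil>)"
      using x by (auto simp: G_def intro: order_trans[OF _ real_nat_ceiling_ge])
    then show ?thesis by blast
  qed
  then have cover: "\<Union>(range G) = lA A" by (auto simp: G_def)
  have closed: "closedin (lA_metric.mtopology A) (G m)" for m
    unfolding G_def by (rule closedin_lA_uniform_bound[OF lin bnd])
  obtain m x0 r where r: "r > 0" "x0 \<in> G m" "lA_metric.mball A x0 r \<subseteq> G m"
    by (rule lA_Baire[OF closed cover])
  then have x0: "x0 \<in> lA A" by (simp add: G_def)
  obtain N where N: "\<And>z. z \<in> lA A \<Longrightarrow> lA_seminorm A N z < r / 4 \<Longrightarrow>
      (\<lambda>k. x0 k + z k) \<in> lA_metric.mball A x0 r"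
    using lA_mball_contains_seminorm_ball[OF x0 r(1)] by blast
  have "norm (f i z) \<le> 2 * real m" if z: "z \<in> lA A" "lA_seminorm A N z < r / 4" for i z
  proof -
    have y: "(\<lambda>k. x0 k + z k) \<in> G m" using N[OF z] r(3) by blast
    then have "norm (f i (\<lambda>k. x0 k + z k)) \<le> real m" "norm (f i x0) \<le> real m"
      using r(2) by (auto simp: G_def)
    then show ?thesis
      using lA_linearD(1)[OF lin x0 z(1)] norm_triangle_ineq4[of "f i (\<lambda>k. x0 k + z k)" "f i x0"]
      by simp
  qed
  then have "norm (f i x) \<le> 2 * (2 * real m) / (r / 4) * lA_seminorm A N x" if "x \<in> lA A" for i x
    using r(1) that by (intro lA_bound_of_ball_bound[OF lin]) auto
  then show ?thesis by blast
qed

lemma lA_limit_linear_bounded: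
  assumes lin: "\<And>i. lA_linear A (f i)" and bnd: "\<And>i. lA_bounded A (f i)"
    and lim: "\<And>x. x \<in> lA A \<Longrightarrow> (\<lambda>i. f i x) \<longlonglongrightarrow> g x"
  shows "lA_linear A g" "lA_bounded A g"
proof -
  show "lA_linear A g"
    unfolding lA_linear_def
  proof (intro conjI ballI allI)
    fix x y assume x: "x \<in> lA A" and y: "y \<in> lA A"
    have "(\<lambda>i. f i (\<lambda>k. x k + y k)) \<longlonglongrightarrow> g x + g y"
      using tendsto_add[OF lim[OF x] lim[OF y]] by (simp add: lA_linearD(1)[OF lin x y])
    then show "g (\<lambda>k. x k + y k) = g x + g y"
      using lim[OF lA_add[OF x y]] LIMSEQ_unique by blast
  next
    fix x c assume x: "x \<in> lA A"
    have "(\<lambda>i. f i (\<lambda>k. c * x k)) \<longlonglongrightarrow> c * g x"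
      using tendsto_mult_left[OF lim[OF x], of c] by (simp add: lA_linearD(2)[OF lin x])
    then show "g (\<lambda>k. c * x k) = c * g x"
      using lim[OF lA_scale[OF x]] LIMSEQ_unique by blast
  qed
  have "\<exists>B. \<forall>i. norm (f i x) \<le> B" if "x \<in> lA A" for x
    using convergent_imp_Bseq[OF convergentI[OF lim[OF that]]] by (auto simp: Bseq_def)
  then obtain C N where "\<forall>i. \<forall>x\<in>lA A. norm (f i x) \<le> C * lA_seminorm A N x"
    using lA_uniform_boundedness[of A f, OF lin bnd] by blast
  then have "norm (g x) \<le> C * lA_seminorm A N x" if "x \<in> lA A" for x
    using that by (intro Lim_bounded[OF tendsto_norm[OF lim], of _ 0]) auto
  then show "lA_bounded A g" unfolding lA_bounded_def by blast
qed

section \<open>From l-replaceability to \<sigma>_p^q[s]\<close>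

lemma row_sum_linear_bounded:
  assumes "lA D = lA A"
  shows "lA_linear A (row_sum D n)" "lA_bounded A (row_sum D n)"
proof -
  have lin: "lA_linear A (\<lambda>x. row_partial D n x m)" for m
    by (simp add: lA_linear_def row_partial_add row_partial_scale)
  have bnd: "lA_bounded A (\<lambda>x. row_partial D n x m)" for m
    unfolding row_partial_def by (rule lA_bounded_finite_combination)
  have lim: "(\<lambda>m. row_partial D n x m) \<longlonglongrightarrow> row_sum D n x" if "x \<in> lA A" for x
    using row_partial_tendsto assms that by blast
  show "lA_linear A (row_sum D n)" "lA_bounded A (row_sum D n)"
    using lA_limit_linear_bounded[OF lin bnd lim] by auto
qed

lemma column_sums_functional_in_dual:
  assumes eq: "lA D = lA A" and col: "\<And>k. (\<lambda>n. D n k) sums 1"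
  shows "(\<lambda>x. \<Sum>n. row_sum D n x) \<in> lA_dual A" "(\<Sum>n. row_sum D n (delta j)) = 1"
proof -
  have lin: "lA_linear A (\<lambda>x. \<Sum>n<M. row_sum D n x)" for M
    using row_sum_linear_bounded(1)[OF eq] by (simp add: lA_linear_def sum.distrib sum_distrib_left)
  have bnd: "lA_bounded A (\<lambda>x. \<Sum>n<M. row_sum D n x)" for M
    by (intro lA_bounded_sum row_sum_linear_bounded(2)[OF eq])
  have lim: "(\<lambda>M. \<Sum>n<M. row_sum D n x) \<longlonglongrightarrow> (\<Sum>n. row_sum D n x)" if "x \<in> lA A" for x
  proof -
    have "summable (\<lambda>n. row_sum D n x)"
      using lA_summable_row_sum[of x D] that eq by (simp add: summable_norm_cancel)
    then show ?thesis by (rule summable_LIMSEQ)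
  qed
  show "(\<lambda>x. \<Sum>n. row_sum D n x) \<in> lA_dual A"
    using lA_limit_linear_bounded[OF lin bnd lim] by (intro lA_linear_bounded_in_dual)
  show "(\<Sum>n. row_sum D n (delta j)) = 1"
    using col[of j] by (simp add: row_sum_delta sums_iff)
qed

lemma l_replaceable_imp_sigma:
  assumes "l_replaceable A" and DF: "DF_lA p q A = lA A"
  shows "lA A \<subseteq> sigma_pq_s p q"
proof
  obtain D where eq: "lA D = lA A" and col: "\<And>k. (\<lambda>n. D n k) sums 1"
    using assms(1) unfolding l_replaceable_def by blast
  fix x assume "x \<in> lA A"
  then have "convergent (mean_pq p q (\<lambda>j. x j * (\<Sum>n. row_sum D n (delta j))))"
    using DF column_sums_functional_in_dual(1)[OF eq col] by (auto simp: DF_lA_def DF_plus_lA_def)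
  then show "x \<in> sigma_pq_s p q"
    using column_sums_functional_in_dual(2)[OF eq col] by (simp add: sigma_pq_s_def)
qed

lemma phi_eventually_zero:
  assumes "x \<in> phi"
  shows "\<exists>M. \<forall>k\<ge>M. x k = 0"
proof -
  obtain F where F: "finite F" "\<And>k. k \<notin> F \<Longrightarrow> x k = 0"
    using assms unfolding phi_def by blast
  then obtain m where "\<forall>k\<in>F. k \<le> m" using finite_nat_set_iff_bounded_le by blast
  then have "\<forall>k\<ge>Suc m. x k = 0" using F(2) by (meson not_less_eq_eq)
  then show ?thesis by blast
qed

lemma phi_summable: "x \<in> phi \<Longrightarrow> summable x"
  unfolding phi_def by (auto intro: summable_finite)

lemma phi_add: "x \<in> phi \<Longrightarrow> y \<in> phi \<Longrightarrow> (\<lambda>k. x k + y k) \<in> phi"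
  unfolding phi_def
proof safe
  fix F G assume "finite F" "\<forall>k. k \<notin> F \<longrightarrow> x k = 0" "finite G" "\<forall>k. k \<notin> G \<longrightarrow> y k = 0"
  then show "\<exists>H. finite H \<and> (\<forall>k. k \<notin> H \<longrightarrow> x k + y k = 0)"
    by (intro exI[of _ "F \<union> G"]) auto
qed

lemma phi_scale: "x \<in> phi \<Longrightarrow> (\<lambda>k. c * x k) \<in> phi"
  unfolding phi_def by auto

lemma phi_zero: "(\<lambda>k. 0) \<in> phi"
  unfolding phi_def by blast

lemma delta_in_phi: "delta j \<in> phi"
  unfolding phi_def delta_def by (intro CollectI exI[of _ "{j}"]) auto

lemma mean_pq_add: "mean_pq p q (\<lambda>k. x k + y k) n = mean_pq p q x n + mean_pq p q y n"
  by (simp add: mean_pq_def sum.distrib distrib_left)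

lemma mean_pq_scale: "mean_pq p q (\<lambda>k. c * x k) n = c * mean_pq p q x n"
  by (simp add: mean_pq_def sum_distrib_left mult.left_commute)

lemma norm_mean_pq_le:
  assumes "p n < q n"
  shows "norm (mean_pq p q x n) \<le> (\<Sum>j<q n. norm (x j))"
proof -
  have "norm (\<Sum>k\<in>{p n + 1..q n}. \<Sum>j<k. x j) \<le> (\<Sum>k\<in>{p n + 1..q n}. \<Sum>j<q n. norm (x j))"
    by (intro order_trans[OF norm_sum] sum_mono order_trans[OF norm_sum] sum_mono2) auto
  also have "\<dots> = real (q n - p n) * (\<Sum>j<q n. norm (x j))" by simp
  moreover have "norm (mean_pq p q x n) = norm (\<Sum>k\<in>{p n + 1..q n}. \<Sum>j<k. x j) / real (q n - p n)"
    unfolding mean_pq_def by (simp only: norm_mult norm_divide norm_one norm_of_nat) simp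
  ultimately show ?thesis
    using assms by (simp add: pos_divide_le_eq mult.commute)
qed

lemma partial_sums_eventually_zero:
  fixes x :: "nat \<Rightarrow> 'a::real_normed_vector"
  assumes M: "\<forall>k\<ge>M. x k = 0"
  shows partial_sum_eq_sum: "k \<ge> M \<Longrightarrow> (\<Sum>j<k. x j) = (\<Sum>j<M. x j)"
    and norm_partial_sum_diff_le: "norm ((\<Sum>j<k. x j) - (\<Sum>j<M. x j)) \<le> 2 * (\<Sum>j<M. norm (x j))"
proof -
  show eq: "(\<Sum>j<k. x j) = (\<Sum>j<M. x j)" if "k \<ge> M" for k
    using that M by (simp add: sum.mono_neutral_right[of "{..<k}" "{..<M}"])
  show "norm ((\<Sum>j<k. x j) - (\<Sum>j<M. x j)) \<le> 2 * (\<Sum>j<M. norm (x j))"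
  proof (cases "k \<le> M")
    case True
    have "norm (\<Sum>j<k. x j) \<le> (\<Sum>j<M. norm (x j))"
      using True by (intro order_trans[OF norm_sum sum_mono2]) auto
    then show ?thesis
      using norm_triangle_ineq4[of "\<Sum>j<k. x j" "\<Sum>j<M. x j"] norm_sum[of x "{..<M}"] by simp
  next
    case False
    then show ?thesis using eq[of k] by (simp add: sum_nonneg)
  qed
qed

lemma norm_mean_pq_diff_le:
  assumes pq: "p n < q n" and M: "\<forall>k\<ge>M. x k = 0" and qM: "M \<le> q n"
  shows "norm (mean_pq p q x n - (\<Sum>j<M. x j)) \<le> 2 * (\<Sum>j<M. norm (x j)) * M / q n"
proof -
  define S where "S = (\<Sum>j<M. x j)"
  define B where "B = 2 * (\<Sum>j<M. norm (x j))"
  define K where "K = {p n + 1..q n}"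
  have partial_eq: "(\<Sum>j<k. x j) = S" if "k \<ge> M" for k
    unfolding S_def by (rule partial_sum_eq_sum[OF M that])
  have partial_le: "norm ((\<Sum>j<k. x j) - S) \<le> B" for k
    unfolding S_def B_def by (rule norm_partial_sum_diff_le[OF M])
  define L where "L = q n - p n"
  have L: "L > 0" using pq by (simp add: L_def)
  have "mean_pq p q x n - S = (\<Sum>k\<in>K. (\<Sum>j<k. x j) - S) / of_nat L"
    using L by (simp add: mean_pq_def K_def L_def[symmetric] sum_subtractf field_simps)
  also have "(\<Sum>k\<in>K. (\<Sum>j<k. x j) - S) = (\<Sum>k\<in>K \<inter> {..<M}. (\<Sum>j<k. x j) - S)"
    by (rule sum.mono_neutral_right) (auto simp: K_def, metis not_le partial_eq)
  finally have "norm (mean_pq p q x n - S) = norm (\<Sum>k\<in>K \<inter> {..<M}. (\<Sum>j<k. x j) - S) / L"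
    by (simp add: norm_divide)
  also have "\<dots> \<le> card (K \<inter> {..<M}) * B / L"
    by (intro divide_right_mono order_trans[OF norm_sum sum_bounded_above[OF partial_le]]) simp
  also have "\<dots> \<le> (M - p n) * B / L"
  proof -
    have "card (K \<inter> {..<M}) \<le> card {p n + 1..<M}"
      by (intro card_mono) (auto simp: K_def)
    then show ?thesis by (intro divide_right_mono mult_right_mono) (auto simp: B_def sum_nonneg)
  qed
  also have "\<dots> \<le> B * M / q n"
  proof (cases "p n < M")
    case True
    have ineq: "real (M - p n) * q n \<le> M * real L"
      using True pq mult_left_mono[of "real M" "real (q n)" "real (p n)"] qM
      by (simp add: L_def of_nat_diff algebra_simps)
    then have "real (M - p n) * B * q n \<le> B * M * L"
      using mult_right_mono[OF ineq, of B] by (simp add: B_def sum_nonneg algebra_simps)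
    then show ?thesis
      using pq L by (simp add: field_simps)
  qed (simp add: B_def sum_nonneg)
  finally show ?thesis by (simp add: S_def B_def)
qed

lemma mean_pq_tendsto_sum:
  assumes pq: "\<And>n. p n < q n" and q: "filterlim q at_top sequentially" and M: "\<forall>k\<ge>M. x k = 0"
  shows "mean_pq p q x \<longlonglongrightarrow> (\<Sum>j<M. x j)"
proof -
  define B where "B = 2 * (\<Sum>j<M. norm (x j))"
  have "\<forall>\<^sub>F n in sequentially. M \<le> q n"
    using q by (simp add: filterlim_at_top)
  then have "\<forall>\<^sub>F n in sequentially. norm (mean_pq p q x n - (\<Sum>j<M. x j)) \<le> B * M / q n"
  proof eventually_elim
    case (elim n)
    then show ?case
      using norm_mean_pq_diff_le[where p=p and q=q and n=n, OF pq M] by (simp add: B_def)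
  qed
  moreover have "(\<lambda>n. B * M / real (q n)) \<longlonglongrightarrow> 0"
    by (intro tendsto_divide_0[OF tendsto_const] filterlim_at_top_imp_at_infinity
        filterlim_compose[OF filterlim_real_sequentially q])
  ultimately have "(\<lambda>n. mean_pq p q x n - (\<Sum>j<M. x j)) \<longlonglongrightarrow> 0"
    by (rule Lim_null_comparison)
  then show ?thesis by (rule LIM_zero_cancel)
qed

lemma sigma_imp_phi_sum_bounded:
  assumes pq: "\<And>n. p n < q n" and q: "filterlim q at_top sequentially"
    and sub: "lA A \<subseteq> sigma_pq_s p q" and phi: "phi \<subseteq> lA A"
  shows "\<exists>C N. C > 0 \<and> (\<forall>x\<in>phi. norm (suminf x) \<le> C * lA_seminorm A N x)"
proof -
  have lin: "lA_linear A (\<lambda>x. mean_pq p q x n)" for n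
    by (simp add: lA_linear_def mean_pq_add mean_pq_scale)
  have "norm (mean_pq p q x n) \<le> 1 * lA_seminorm A (q n) x" if "x \<in> lA A" for x n
    using norm_mean_pq_le[where p=p and q=q and n=n, OF pq] lA_seminorm_ge_coords[OF that] by (metis mult_1 order_trans)
  then have bnd: "lA_bounded A (\<lambda>x. mean_pq p q x n)" for n
    unfolding lA_bounded_def by blast
  have lim: "(\<lambda>n. mean_pq p q x n) \<longlonglongrightarrow> lim (mean_pq p q x)" if "x \<in> lA A" for x
    using sub that by (auto simp: sigma_pq_s_def convergent_LIMSEQ_iff)
  obtain C N where "C > 0" and CN: "\<forall>x\<in>lA A. norm (lim (mean_pq p q x)) \<le> C * lA_seminorm A N x"
    using lA_boundedE[OF lA_limit_linear_bounded(2)[OF lin bnd lim]] by metis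
  have "lim (mean_pq p q x) = suminf x" if x: "x \<in> phi" for x
  proof -
    obtain M where M: "\<forall>k\<ge>M. x k = 0" using phi_eventually_zero[OF x] by blast
    then have "suminf x = (\<Sum>j<M. x j)" by (intro suminf_finite) auto
    with mean_pq_tendsto_sum[OF pq q M] show ?thesis by (simp add: limI)
  qed
  with \<open>C > 0\<close> CN phi show ?thesis by (metis subsetD)
qed

section \<open>Hahn--Banach extension in countably many directions\<close>

text \<open>A real-linear functional \<open>\<psi>\<close> on a subspace \<open>S\<close>, dominated by a sublinear \<open>Q\<close>
  defined on pairs of an element of \<open>S\<close> and a finitely supported real sequence, is extended
  one coordinate of the sequence at a time; countability makes Zorn's lemma unnecessary.\<close>
locale countable_hahn_banach =
  fixes S :: "seq set" and \<psi> :: "seq \<Rightarrow> real" and Q :: "seq \<Rightarrow> (nat \<Rightarrow> real) \<Rightarrow> real"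
  assumes S_zero: "(\<lambda>k. 0) \<in> S"
    and S_add: "\<And>x y. x \<in> S \<Longrightarrow> y \<in> S \<Longrightarrow> (\<lambda>k. x k + y k) \<in> S"
    and S_scale: "\<And>x r. x \<in> S \<Longrightarrow> (\<lambda>k. of_real r * x k) \<in> S"
    and \<psi>_add: "\<And>x y. x \<in> S \<Longrightarrow> y \<in> S \<Longrightarrow> \<psi> (\<lambda>k. x k + y k) = \<psi> x + \<psi> y"
    and \<psi>_scale: "\<And>x r. x \<in> S \<Longrightarrow> \<psi> (\<lambda>k. of_real r * x k) = r * \<psi> x"
    and Q_add: "\<And>x y t u. x \<in> S \<Longrightarrow> y \<in> S \<Longrightarrow> \<forall>\<^sub>F i in sequentially. t i = 0 \<Longrightarrow>
        \<forall>\<^sub>F i in sequentially. u i = 0 \<Longrightarrow> Q (\<lambda>k. x k + y k) (\<lambda>i. t i + u i) \<le> Q x t + Q y u"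
    and Q_scale: "\<And>x t r. x \<in> S \<Longrightarrow> \<forall>\<^sub>F i in sequentially. t i = 0 \<Longrightarrow> r > 0 \<Longrightarrow>
        Q (\<lambda>k. of_real r * x k) (\<lambda>i. r * t i) = r * Q x t"
    and \<psi>_le_Q: "\<And>x. x \<in> S \<Longrightarrow> \<psi> x \<le> Q x (\<lambda>i. 0)"
begin

definition partial_value :: "nat \<Rightarrow> (nat \<Rightarrow> real) \<Rightarrow> seq \<Rightarrow> (nat \<Rightarrow> real) \<Rightarrow> real" where
  "partial_value k c x t = \<psi> x + (\<Sum>i<k. t i * c i)"

definition dominated :: "nat \<Rightarrow> (nat \<Rightarrow> real) \<Rightarrow> bool" where
  "dominated k c \<longleftrightarrow> (\<forall>x t. x \<in> S \<longrightarrow> (\<forall>i\<ge>k. t i = 0) \<longrightarrow> partial_value k c x t \<le> Q x t)"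

definition unit_at :: "nat \<Rightarrow> nat \<Rightarrow> real" where
  "unit_at k i = (if i = k then 1 else 0)"

lemma dominated_0: "dominated 0 c"
proof -
  have "t = (\<lambda>i. 0)" if "\<forall>i\<ge>0. t i = 0" for t :: "nat \<Rightarrow> real" using that by auto
  then show ?thesis unfolding dominated_def partial_value_def using \<psi>_le_Q by auto
qed

lemma partial_value_rescale:
  assumes "\<sigma> > 0" "x \<in> S"
  shows "partial_value k c x t = \<sigma> * partial_value k c (\<lambda>j. of_real (1 / \<sigma>) * x j) (\<lambda>i. t i / \<sigma>)"
  using assms \<psi>_scale[OF assms(2), of "1 / \<sigma>"]
  by (simp add: partial_value_def distrib_left sum_distrib_left)

lemma Q_rescale:
  assumes "\<sigma> > 0" "x \<in> S" "\<forall>\<^sub>F i in sequentially. t i = 0"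
  shows "Q x t = \<sigma> * Q (\<lambda>j. of_real (1 / \<sigma>) * x j) (\<lambda>i. t i / \<sigma>)"
proof -
  have "\<forall>\<^sub>F i in sequentially. t i / \<sigma> = 0" using assms(3) by eventually_elim simp
  then have "Q (\<lambda>j. of_real \<sigma> * (of_real (1 / \<sigma>) * x j)) (\<lambda>i. \<sigma> * (t i / \<sigma>))
      = \<sigma> * Q (\<lambda>j. of_real (1 / \<sigma>) * x j) (\<lambda>i. t i / \<sigma>)"
    by (rule Q_scale[OF S_scale[OF assms(2)] _ assms(1)])
  then show ?thesis
    using assms(1) by (simp add: mult.assoc[symmetric] of_real_mult[symmetric])
qed

lemma dominated_gap:
  assumes dom: "dominated k c" and x: "x \<in> S" and y: "y \<in> S"
    and t: "\<forall>i\<ge>k. t i = 0" and u: "\<forall>i\<ge>k. u i = 0"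
  shows "partial_value k c x t - Q x (\<lambda>i. t i - unit_at k i)
    \<le> Q y (\<lambda>i. u i + unit_at k i) - partial_value k c y u"
proof -
  have "partial_value k c x t + partial_value k c y u = partial_value k c (\<lambda>j. x j + y j) (\<lambda>i. t i + u i)"
    using \<psi>_add[OF x y] by (simp add: partial_value_def distrib_right sum.distrib)
  also have "\<dots> \<le> Q (\<lambda>j. x j + y j) (\<lambda>i. t i + u i)"
    using dom S_add[OF x y] t u unfolding dominated_def by simp
  also have "\<dots> = Q (\<lambda>j. x j + y j) (\<lambda>i. (t i - unit_at k i) + (u i + unit_at k i))" by simp
  also have "\<dots> \<le> Q x (\<lambda>i. t i - unit_at k i) + Q y (\<lambda>i. u i + unit_at k i)"
  proof (rule Q_add[OF x y])
    show "\<forall>\<^sub>F i in sequentially. t i - unit_at k i = 0"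
      unfolding eventually_sequentially using t by (intro exI[of _ "Suc k"]) (auto simp: unit_at_def)
    show "\<forall>\<^sub>F i in sequentially. u i + unit_at k i = 0"
      unfolding eventually_sequentially using u by (intro exI[of _ "Suc k"]) (auto simp: unit_at_def)
  qed
  finally show ?thesis by linarith
qed

lemma dominated_SucI:
  assumes dom: "dominated k c"
    and lower: "\<And>x t. x \<in> S \<Longrightarrow> \<forall>i\<ge>k. t i = 0 \<Longrightarrow>
      partial_value k c x t - Q x (\<lambda>i. t i - unit_at k i) \<le> v"
    and upper: "\<And>x t. x \<in> S \<Longrightarrow> \<forall>i\<ge>k. t i = 0 \<Longrightarrow>
      v \<le> Q x (\<lambda>i. t i + unit_at k i) - partial_value k c x t"
  shows "dominated (Suc k) (c(k := v))"
  unfolding dominated_def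
proof (intro allI impI)
  fix x and t :: "nat \<Rightarrow> real" assume x: "x \<in> S" and t: "\<forall>i\<ge>Suc k. t i = 0"
  define \<tau> where "\<tau> = t k"
  define t0 where "t0 = t(k := 0)"
  have t0: "\<forall>i\<ge>k. t0 i = 0" and t0_div: "\<forall>i\<ge>k. t0 i / \<sigma> = 0" for \<sigma> :: real
    using t by (auto simp: t0_def)
  have ev: "\<forall>\<^sub>F i in sequentially. t i = 0" using t by (auto simp: eventually_sequentially)
  have t_eq: "t i / \<sigma> = t0 i / \<sigma> + (\<tau> / \<sigma>) * unit_at k i" for i \<sigma>
    by (simp add: t0_def \<tau>_def unit_at_def add_divide_distrib)
  have lhs: "partial_value (Suc k) (c(k := v)) x t = partial_value k c x t0 + \<tau> * v"
    by (simp add: partial_value_def t0_def \<tau>_def)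
  consider "\<tau> = 0" | "\<tau> > 0" | "\<tau> < 0" by linarith
  then show "partial_value (Suc k) (c(k := v)) x t \<le> Q x t"
  proof cases
    case 1
    then have "t = t0" by (auto simp: t0_def \<tau>_def)
    then show ?thesis using dom x t0 lhs 1 unfolding dominated_def by simp
  next
    case 2
    have v_le: "v \<le> Q (\<lambda>j. of_real (1 / \<tau>) * x j) (\<lambda>i. t i / \<tau>)
        - partial_value k c (\<lambda>j. of_real (1 / \<tau>) * x j) (\<lambda>i. t0 i / \<tau>)"
      using upper[OF S_scale[OF x, of "1 / \<tau>"] t0_div[of \<tau>]] 2 by (simp add: t_eq)
    have "\<tau> * v \<le> Q x t - partial_value k c x t0"
      using mult_left_mono[OF v_le, of \<tau>] 2 Q_rescale[OF 2 x ev] partial_value_rescale[OF 2 x, of k c t0]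
      by (simp add: right_diff_distrib)
    then show ?thesis using lhs by simp
  next
    case 3
    then have pos: "- \<tau> > 0" by simp
    have v_ge: "partial_value k c (\<lambda>j. of_real (1 / - \<tau>) * x j) (\<lambda>i. t0 i / - \<tau>)
        - Q (\<lambda>j. of_real (1 / - \<tau>) * x j) (\<lambda>i. t i / - \<tau>) \<le> v"
      using lower[OF S_scale[OF x, of "1 / - \<tau>"] t0_div[of "- \<tau>"]] 3 by (simp add: t_eq)
    have "partial_value k c x t0 - Q x t \<le> - \<tau> * v"
      using mult_left_mono[OF v_ge, of "- \<tau>"] pos Q_rescale[OF pos x ev]
        partial_value_rescale[OF pos x, of k c t0]
      by (simp add: right_diff_distrib)
    then show ?thesis using lhs by simp
  qed
qed

lemma dominated_Suc:
  assumes dom: "dominated k c"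
  shows "\<exists>v. dominated (Suc k) (c(k := v))"
proof -
  define W where "W = {(x, t :: nat \<Rightarrow> real). x \<in> S \<and> (\<forall>i\<ge>k. t i = 0)}"
  define v where "v = Sup {partial_value k c x t - Q x (\<lambda>i. t i - unit_at k i) | x t. (x, t) \<in> W}"
  have W0: "((\<lambda>j. 0), (\<lambda>i. 0)) \<in> W" using S_zero by (simp add: W_def)
  have "partial_value k c x t - Q x (\<lambda>i. t i - unit_at k i)
      \<le> Q (\<lambda>j. 0) (\<lambda>i. 0 + unit_at k i) - partial_value k c (\<lambda>j. 0) (\<lambda>i. 0)"
    if "x \<in> S" "\<forall>i\<ge>k. t i = 0" for x t
    by (rule dominated_gap[OF dom that(1) S_zero that(2)]) simp
  then have bdd: "bdd_above {partial_value k c x t - Q x (\<lambda>i. t i - unit_at k i) | x t. (x, t) \<in> W}"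
    by (intro bdd_aboveI) (auto simp: W_def)
  have "dominated (Suc k) (c(k := v))"
  proof (rule dominated_SucI[OF dom])
    show "partial_value k c x t - Q x (\<lambda>i. t i - unit_at k i) \<le> v"
      if "x \<in> S" "\<forall>i\<ge>k. t i = 0" for x t
      unfolding v_def using that by (intro cSup_upper bdd) (auto simp: W_def)
    show "v \<le> Q x (\<lambda>i. t i + unit_at k i) - partial_value k c x t"
      if "x \<in> S" "\<forall>i\<ge>k. t i = 0" for x t
      unfolding v_def using that W0 dominated_gap[OF dom] by (intro cSup_least) (auto simp: W_def)
  qed
  then show ?thesis by blast
qed

lemma hahn_banach_countable: "\<exists>c. \<forall>k. dominated k c"
proof -
  obtain F where F: "\<And>n. dominated n (F n) \<and> (\<forall>i<n. F (Suc n) i = F n i)"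
    using dependent_nat_choice[of dominated "\<lambda>n c c'. \<forall>i<n. c' i = c i"] dominated_0 dominated_Suc
    by (metis fun_upd_other nat_neq_iff)
  define c where "c i = F (Suc i) i" for i
  have F_c: "F n i = c i" if "i < n" for n i
    using that
  proof (induction n)
    case (Suc n)
    then show ?case using F[of n] by (cases "i = n") (auto simp: c_def)
  qed simp
  have "(\<Sum>i<k. t i * F k i) = (\<Sum>i<k. t i * c i)" for k t
    by (intro sum.cong) (auto simp: F_c)
  then have "dominated k c" for k
    using F[of k] unfolding dominated_def partial_value_def by simp
  then show ?thesis by blast
qed

end

text \<open>The seminorm \<open>lA_seminorm A N\<close> is the norm of the image of \<open>x\<close> under the embedding
  of l_A into \<open>\<complex>\<^sup>N \<times> \<ell>\<^sup>1 \<times> (\<ell>\<^sup>\<infinity>)\<^sup>N\<close>, \<open>x \<mapsto> ((x\<^sub>j)\<^sub>j\<^sub><\<^sub>N, Ax, (row_partial A n x)\<^sub>n\<^sub><\<^sub>N)\<close>.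
  A perturbation \<open>z\<close>, finitely supported on \<open>coeff_idx\<close>, is added to this image:
  \<open>Coord_at\<close>, \<open>Image_at\<close> and \<open>Partial_at\<close> move single coordinates, while \<open>Const_at n\<close>
  shifts all partial sums of row \<open>n\<close> from \<open>m = 1\<close> on.  The latter is what makes the partial
  sums of a unit vector, \<open>m \<mapsto> A n k * [m > k]\<close>, expressible by a finite perturbation.\<close>
datatype coeff_idx = Coord_at nat | Image_at nat | Partial_at nat nat | Const_at nat

instance coeff_idx :: countable
  by countable_datatype

definition perturbed_image :: "cmatrix \<Rightarrow> seq \<Rightarrow> (coeff_idx \<Rightarrow> complex) \<Rightarrow> nat \<Rightarrow> complex" where
  "perturbed_image A x z n = row_sum A n x + z (Image_at n)"

definition perturbed_partial ::
  "cmatrix \<Rightarrow> seq \<Rightarrow> (coeff_idx \<Rightarrow> complex) \<Rightarrow> nat \<Rightarrow> nat \<Rightarrow> complex" where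
  "perturbed_partial A x z n m =
     row_partial A n x m + z (Partial_at n m) + (if 1 \<le> m then z (Const_at n) else 0)"

definition perturbed_seminorm :: "cmatrix \<Rightarrow> nat \<Rightarrow> seq \<Rightarrow> (coeff_idx \<Rightarrow> complex) \<Rightarrow> real" where
  "perturbed_seminorm A N x z = (\<Sum>j<N. norm (x j + z (Coord_at j)))
     + l1_norm (perturbed_image A x z) + (\<Sum>n<N. sup_norm (perturbed_partial A x z n))"

lemma perturbed_seminorm_unperturbed: "perturbed_seminorm A N x (\<lambda>_. 0) = lA_seminorm A N x"
proof -
  have "perturbed_image A x (\<lambda>_. 0) = (\<lambda>n. row_sum A n x)"
    "perturbed_partial A x (\<lambda>_. 0) n = row_partial A n x" for n
    by (simp_all add: fun_eq_iff perturbed_image_def perturbed_partial_def)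
  then show ?thesis by (simp add: perturbed_seminorm_def lA_seminorm_def)
qed

lemma finite_support_slice:
  assumes "finite {\<xi>. z \<xi> \<noteq> 0}" "inj g"
  shows "finite {n. z (g n) \<noteq> 0}"
  using finite_vimageI[OF assms] by (simp add: vimage_def)

lemma norm_le_sum_support:
  assumes "finite F" "\<And>m. m \<notin> F \<Longrightarrow> f m = 0"
  shows "norm (f m) \<le> (\<Sum>m\<in>F. norm (f m))"
  using assms by (cases "m \<in> F") (auto intro: member_le_sum simp: sum_nonneg)

lemma summable_perturbed_image:
  assumes x: "x \<in> lA A" and z: "finite {\<xi>. z \<xi> \<noteq> 0}"
  shows "summable (\<lambda>n. norm (perturbed_image A x z n))"
proof -
  have "summable (\<lambda>n. norm (z (Image_at n)))"
    using finite_support_slice[OF z, of Image_at] by (intro summable_finite) (auto simp: inj_def)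
  then show ?thesis
    unfolding perturbed_image_def by (intro summable_norm_add lA_summable_row_sum x)
qed

lemma Bseq_perturbed_partial:
  assumes x: "x \<in> lA A" and z: "finite {\<xi>. z \<xi> \<noteq> 0}"
  shows "Bseq (perturbed_partial A x z n)"
proof (rule BseqI')
  define F where "F = {m. z (Partial_at n m) \<noteq> 0}"
  have F: "finite F" unfolding F_def by (rule finite_support_slice[OF z]) (simp add: inj_def)
  fix m
  have "norm (perturbed_partial A x z n m)
      \<le> norm (row_partial A n x m) + norm (z (Partial_at n m)) + norm (z (Const_at n))"
    unfolding perturbed_partial_def by (rule order_trans[OF norm_triangle_ineq add_mono]) 
      (auto intro: norm_triangle_ineq)
  also have "\<dots> \<le> sup_norm (row_partial A n x) + (\<Sum>m\<in>F. norm (z (Partial_at n m))) + norm (z (Const_at n))"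
    using norm_le_sum_support[OF F, of "\<lambda>m. z (Partial_at n m)"]
    by (intro add_mono sup_norm_upper Bseq_row_partial x order_refl) (auto simp: F_def)
  finally show "norm (perturbed_partial A x z n m) \<le> \<dots>" .
qed

lemma perturbed_seminorm_add:
  assumes x: "x \<in> lA A" and y: "y \<in> lA A"
    and z: "finite {\<xi>. z \<xi> \<noteq> 0}" and z': "finite {\<xi>. z' \<xi> \<noteq> 0}"
  shows "perturbed_seminorm A N (\<lambda>k. x k + y k) (\<lambda>\<xi>. z \<xi> + z' \<xi>)
    \<le> perturbed_seminorm A N x z + perturbed_seminorm A N y z'"
proof -
  have "(\<Sum>j<N. norm (x j + y j + (z (Coord_at j) + z' (Coord_at j))))
      \<le> (\<Sum>j<N. norm (x j + z (Coord_at j))) + (\<Sum>j<N. norm (y j + z' (Coord_at j)))"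
    unfolding sum.distrib[symmetric]
    by (intro sum_mono order_trans[OF _ norm_triangle_ineq]) (simp add: algebra_simps)
  moreover have "perturbed_image A (\<lambda>k. x k + y k) (\<lambda>\<xi>. z \<xi> + z' \<xi>)
      = (\<lambda>n. perturbed_image A x z n + perturbed_image A y z' n)"
    by (simp add: fun_eq_iff perturbed_image_def row_sum_add[OF x y] algebra_simps)
  moreover have "perturbed_partial A (\<lambda>k. x k + y k) (\<lambda>\<xi>. z \<xi> + z' \<xi>) n
      = (\<lambda>m. perturbed_partial A x z n m + perturbed_partial A y z' n m)" for n
    by (simp add: fun_eq_iff perturbed_partial_def row_partial_add algebra_simps)
  moreover have "(\<Sum>n<N. sup_norm (\<lambda>m. perturbed_partial A x z n m + perturbed_partial A y z' n m))
      \<le> (\<Sum>n<N. sup_norm (perturbed_partial A x z n)) + (\<Sum>n<N. sup_norm (perturbed_partial A y z' n))"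
    unfolding sum.distrib[symmetric]
    by (intro sum_mono sup_norm_add Bseq_perturbed_partial x y z z')
  ultimately show ?thesis
    unfolding perturbed_seminorm_def
    using l1_norm_add[OF summable_perturbed_image[OF x z] summable_perturbed_image[OF y z']]
    by simp
qed

lemma perturbed_seminorm_scale:
  assumes x: "x \<in> lA A" and z: "finite {\<xi>. z \<xi> \<noteq> 0}"
  shows "perturbed_seminorm A N (\<lambda>k. c * x k) (\<lambda>\<xi>. c * z \<xi>) = norm c * perturbed_seminorm A N x z"
proof -
  have "perturbed_image A (\<lambda>k. c * x k) (\<lambda>\<xi>. c * z \<xi>) = (\<lambda>n. c * perturbed_image A x z n)"
    by (simp add: fun_eq_iff perturbed_image_def row_sum_scale[OF x] distrib_left)
  moreover have "perturbed_partial A (\<lambda>k. c * x k) (\<lambda>\<xi>. c * z \<xi>) n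
      = (\<lambda>m. c * perturbed_partial A x z n m)" for n
    by (simp add: fun_eq_iff perturbed_partial_def row_partial_scale distrib_left)
  moreover have "(\<Sum>j<N. norm (c * x j + c * z (Coord_at j)))
      = norm c * (\<Sum>j<N. norm (x j + z (Coord_at j)))"
    by (simp add: sum_distrib_left norm_mult distrib_left[symmetric])
  ultimately show ?thesis
    unfolding perturbed_seminorm_def
    by (simp add: l1_norm_scale summable_perturbed_image[OF x z] sup_norm_scale
        Bseq_perturbed_partial[OF x z] norm_mult distrib_left sum_distrib_left)
qed

text \<open>Complex coefficients are encoded by real sequences, real and imaginary part of the
  \<open>\<xi>\<close>-th coefficient sitting at \<open>to_nat (\<xi>, False)\<close> and \<open>to_nat (\<xi>, True)\<close>.\<close>
definition complex_coords :: "(nat \<Rightarrow> real) \<Rightarrow> coeff_idx \<Rightarrow> complex" where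
  "complex_coords t \<xi> = Complex (t (to_nat (\<xi>, False))) (t (to_nat (\<xi>, True)))"

lemma complex_coords_add: "complex_coords (\<lambda>i. t i + u i) = (\<lambda>\<xi>. complex_coords t \<xi> + complex_coords u \<xi>)"
  by (simp add: fun_eq_iff complex_coords_def complex_eq_iff)

lemma complex_coords_scale: "complex_coords (\<lambda>i. r * t i) = (\<lambda>\<xi>. of_real r * complex_coords t \<xi>)"
  by (simp add: fun_eq_iff complex_coords_def complex_eq_iff)

lemma finite_support_complex_coords:
  assumes "\<forall>\<^sub>F i in sequentially. t i = 0"
  shows "finite {\<xi>. complex_coords t \<xi> \<noteq> 0}"
proof -
  obtain K where K: "\<And>i. i \<ge> K \<Longrightarrow> t i = 0" using assms by (auto simp: eventually_sequentially)
  have "{\<xi>. complex_coords t \<xi> \<noteq> 0} \<subseteq> fst ` (to_nat -` {..<K} :: (coeff_idx \<times> bool) set)"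
  proof
    fix \<xi> assume "\<xi> \<in> {\<xi>. complex_coords t \<xi> \<noteq> 0}"
    then have "to_nat (\<xi>, False) < K \<or> to_nat (\<xi>, True) < K"
      using K by (auto simp: complex_coords_def complex_eq_iff not_le[symmetric])
    then show "\<xi> \<in> fst ` (to_nat -` {..<K} :: (coeff_idx \<times> bool) set)"
      by (auto intro: rev_image_eqI)
  qed
  moreover have "finite (to_nat -` {..<K} :: (coeff_idx \<times> bool) set)"
    by (intro finite_vimageI) auto
  ultimately show ?thesis by (rule finite_subset[OF _ finite_imageI])
qed

text \<open>\<open>val\<close> holds the coefficients \<open>\<alpha>\<^sub>j = val (Coord_at j)\<close>, \<open>\<beta>\<^sub>n = val (Image_at n)\<close>,
  \<open>\<eta>\<^sub>n\<^sub>,\<^sub>m = val (Partial_at n m)\<close>, \<open>\<gamma>\<^sub>n = val (Const_at n)\<close> of a dominated extension of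
  \<open>x \<mapsto> \<Sum>\<^sub>k x\<^sub>k\<close> to the perturbed images.\<close>
locale sum_extension =
  fixes A :: cmatrix and C :: real and N :: nat and val :: "coeff_idx \<Rightarrow> complex"
  assumes phi_subset: "phi \<subseteq> lA A" and C_nonneg: "0 \<le> C"
    and dominated: "\<And>x z G. x \<in> phi \<Longrightarrow> finite G \<Longrightarrow> (\<And>\<xi>. \<xi> \<notin> G \<Longrightarrow> z \<xi> = 0) \<Longrightarrow>
        Re (suminf x + (\<Sum>\<xi>\<in>G. z \<xi> * val \<xi>)) \<le> C * perturbed_seminorm A N x z"

lemma complex_coords_representation:
  fixes c :: "nat \<Rightarrow> real"
  assumes G: "finite G" and zG: "\<forall>\<xi>. \<xi> \<notin> G \<longrightarrow> z \<xi> = 0"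
  obtains t K where "\<forall>i\<ge>K. t i = 0" "complex_coords t = z"
    "(\<Sum>i<K. t i * c i) = Re (\<Sum>\<xi>\<in>G. z \<xi> * Complex (c (to_nat (\<xi>, False))) (- c (to_nat (\<xi>, True))))"
proof -
  define H where "H = to_nat ` (G \<times> (UNIV :: bool set))"
  define t where "t i = (if i \<in> H then (case from_nat i of (\<xi>, b) \<Rightarrow>
      if b then Im (z \<xi>) else Re (z \<xi>)) else 0)" for i
  have "finite H" using G by (simp add: H_def)
  then obtain K where K: "\<forall>i\<in>H. i < K" by (metis finite_nat_set_iff_bounded)
  have H_iff: "to_nat (\<xi>, b) \<in> H \<longleftrightarrow> \<xi> \<in> G" for \<xi> and b :: bool
    unfolding H_def by (subst inj_image_mem_iff[OF inj_to_nat]) simp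
  have t_enc: "t (to_nat (\<xi>, b)) = (if b then Im (z \<xi>) else Re (z \<xi>))" for \<xi> b
    using zG by (auto simp: t_def H_iff)
  have "(\<Sum>i<K. t i * c i) = (\<Sum>i\<in>H. t i * c i)"
    by (rule sum.mono_neutral_right) (use K in \<open>auto simp: t_def\<close>)
  also have "\<dots> = (\<Sum>(\<xi>, b)\<in>G \<times> (UNIV :: bool set). t (to_nat (\<xi>, b)) * c (to_nat (\<xi>, b)))"
    unfolding H_def by (subst sum.reindex) (auto simp: inj_on_def case_prod_unfold)
  also have "\<dots> = Re (\<Sum>\<xi>\<in>G. z \<xi> * Complex (c (to_nat (\<xi>, False))) (- c (to_nat (\<xi>, True))))"
    by (simp add: sum.cartesian_product[symmetric] UNIV_bool t_enc)
  finally have "(\<Sum>i<K. t i * c i)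
      = Re (\<Sum>\<xi>\<in>G. z \<xi> * Complex (c (to_nat (\<xi>, False))) (- c (to_nat (\<xi>, True))))" .
  moreover have "\<forall>i\<ge>K. t i = 0" using K by (auto simp: t_def)
  moreover have "complex_coords t = z" by (simp add: fun_eq_iff complex_coords_def t_enc complex_eq_iff)
  ultimately show ?thesis using that by blast
qed

lemma countable_hahn_banach_sum:
  assumes phi: "phi \<subseteq> lA A" and C: "C \<ge> 0"
    and bnd: "\<forall>x\<in>phi. norm (suminf x) \<le> C * lA_seminorm A N x"
  shows "countable_hahn_banach phi (\<lambda>x. Re (suminf x))
    (\<lambda>x t. C * perturbed_seminorm A N x (complex_coords t))"
proof
  show "(\<lambda>k. 0) \<in> phi" by (rule phi_zero)
  show "(\<lambda>k. x k + y k) \<in> phi" if "x \<in> phi" "y \<in> phi" for x y by (rule phi_add[OF that])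
  show "(\<lambda>k. of_real r * x k) \<in> phi" if "x \<in> phi" for x r by (rule phi_scale[OF that])
  show "Re (\<Sum>k. x k + y k) = Re (suminf x) + Re (suminf y)" if "x \<in> phi" "y \<in> phi" for x y
    using suminf_add[OF phi_summable[OF that(1)] phi_summable[OF that(2)], symmetric] by simp
  show "Re (\<Sum>k. of_real r * x k) = r * Re (suminf x)" if "x \<in> phi" for x r
    using suminf_mult[OF phi_summable[OF that], of "of_real r"] by simp
  show "C * perturbed_seminorm A N (\<lambda>k. x k + y k) (complex_coords (\<lambda>i. t i + u i))
      \<le> C * perturbed_seminorm A N x (complex_coords t) + C * perturbed_seminorm A N y (complex_coords u)"
    if "x \<in> phi" "y \<in> phi" "\<forall>\<^sub>F i in sequentially. t i = 0" "\<forall>\<^sub>F i in sequentially. u i = 0"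
    for x y t u
    using that phi unfolding complex_coords_add distrib_left[symmetric]
    by (intro mult_left_mono C perturbed_seminorm_add finite_support_complex_coords) auto
  show "C * perturbed_seminorm A N (\<lambda>k. of_real r * x k) (complex_coords (\<lambda>i. r * t i))
      = r * (C * perturbed_seminorm A N x (complex_coords t))"
    if "x \<in> phi" "\<forall>\<^sub>F i in sequentially. t i = 0" "r > 0" for x t r
    using that phi perturbed_seminorm_scale[OF _ finite_support_complex_coords, of x A t N "of_real r"]
    unfolding complex_coords_scale by auto
  show "Re (suminf x) \<le> C * perturbed_seminorm A N x (complex_coords (\<lambda>i. 0))" if "x \<in> phi" for x
  proof -
    have "complex_coords (\<lambda>i. 0) = (\<lambda>_. 0)"
      by (simp add: fun_eq_iff complex_coords_def complex_eq_iff)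
    then show ?thesis
      using order_trans[OF complex_Re_le_cmod bnd[rule_format, OF that]]
      by (simp add: perturbed_seminorm_unperturbed)
  qed
qed

lemma sum_extension_exists:
  assumes phi: "phi \<subseteq> lA A" and C: "C \<ge> 0"
    and bnd: "\<forall>x\<in>phi. norm (suminf x) \<le> C * lA_seminorm A N x"
  shows "\<exists>val. sum_extension A C N val"
proof -
  interpret countable_hahn_banach phi "\<lambda>x. Re (suminf x)"
    "\<lambda>x t. C * perturbed_seminorm A N x (complex_coords t)"
    by (rule countable_hahn_banach_sum[OF assms])
  obtain c where c: "\<And>k. dominated k c" using hahn_banach_countable by blast
  define val where "val \<xi> = Complex (c (to_nat (\<xi>, False))) (- c (to_nat (\<xi>, True)))"
    for \<xi> :: coeff_idx
  have "Re (suminf x + (\<Sum>\<xi>\<in>G. z \<xi> * val \<xi>)) \<le> C * perturbed_seminorm A N x z"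
    if x: "x \<in> phi" and G: "finite G" and zG: "\<forall>\<xi>. \<xi> \<notin> G \<longrightarrow> z \<xi> = 0" for x z G
  proof -
    obtain t K where t: "\<forall>i\<ge>K. t i = 0" "complex_coords t = z"
      "(\<Sum>i<K. t i * c i) = Re (\<Sum>\<xi>\<in>G. z \<xi> * val \<xi>)"
      using complex_coords_representation[OF G zG, of c] unfolding val_def by blast
    then have "Re (suminf x) + (\<Sum>i<K. t i * c i) \<le> C * perturbed_seminorm A N x (complex_coords t)"
      using c[of K] x unfolding dominated_def partial_value_def by blast
    then show ?thesis by (simp add: t)
  qed
  then show ?thesis unfolding sum_extension_def using phi C by blast
qed

section \<open>Construction of the replacing matrix\<close>

lemma summable_column: "phi \<subseteq> lA A \<Longrightarrow> summable (\<lambda>n. norm (A n k))"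
  using delta_in_phi[of k] lA_summable_row_sum[of "delta k" A] by (auto simp: row_sum_delta)

text \<open>The perturbation that cancels the image of \<open>\<omega> \<delta>\<^sup>k\<close> except for the rows \<open>n \<ge> M\<close> of
  its \<open>\<ell>\<^sup>1\<close> component.\<close>
definition cancelling_perturbation :: "cmatrix \<Rightarrow> nat \<Rightarrow> nat \<Rightarrow> nat \<Rightarrow> complex \<Rightarrow> coeff_idx \<Rightarrow> complex"
  where "cancelling_perturbation A N M k \<omega> \<xi> = (case \<xi> of
      Coord_at j \<Rightarrow> if j = k \<and> k < N then - \<omega> else 0
    | Image_at n \<Rightarrow> if n < M then - \<omega> * A n k else 0
    | Partial_at n m \<Rightarrow> if n < N \<and> 1 \<le> m \<and> m \<le> k then \<omega> * A n k else 0
    | Const_at n \<Rightarrow> if n < N then - \<omega> * A n k else 0)"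

definition cancelling_support :: "nat \<Rightarrow> nat \<Rightarrow> nat \<Rightarrow> coeff_idx set" where
  "cancelling_support N M k = insert (Coord_at k)
     (Image_at ` {..<M} \<union> case_prod Partial_at ` ({..<N} \<times> {1..k}) \<union> Const_at ` {..<N})"

lemma finite_cancelling_support: "finite (cancelling_support N M k)"
  by (simp add: cancelling_support_def)

lemma cancelling_perturbation_outside:
  "\<xi> \<notin> cancelling_support N M k \<Longrightarrow> cancelling_perturbation A N M k \<omega> \<xi> = 0"
  by (cases \<xi>) (auto simp: cancelling_support_def cancelling_perturbation_def)

lemma perturbed_seminorm_cancelling:
  assumes col: "summable (\<lambda>n. norm (A n k))"
  shows "perturbed_seminorm A N (\<lambda>j. \<omega> * delta k j) (cancelling_perturbation A N M k \<omega>)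
    = norm \<omega> * (\<Sum>n. norm (A (n + M) k))"
proof -
  define x where "x j = \<omega> * delta k j" for j
  define z where "z = cancelling_perturbation A N M k \<omega>"
  have row: "A n j * x j = (if j = k then \<omega> * A n k else 0)" for n j
    by (auto simp: x_def delta_def)
  have "row_sum A n x = \<omega> * A n k" for n
    using sums_single[of k "\<lambda>_. \<omega> * A n k"] by (simp add: row_sum_def row sums_iff)
  then have image: "perturbed_image A x z n = (if n < M then 0 else \<omega> * A n k)" for n
    by (simp add: perturbed_image_def z_def cancelling_perturbation_def)
  have "row_partial A n x m = (if k < m then \<omega> * A n k else 0)" for n m
    by (simp add: row_partial_def row)
  then have partial: "perturbed_partial A x z n = (\<lambda>m. 0)" if "n < N" for n
    using that by (auto simp: fun_eq_iff perturbed_partial_def z_def cancelling_perturbation_def)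
  have coords: "x j + z (Coord_at j) = 0" if "j < N" for j
    using that by (simp add: x_def delta_def z_def cancelling_perturbation_def)
  have sm: "summable (\<lambda>n. norm (perturbed_image A x z n))"
    unfolding image by (rule summable_comparison_test'[OF summable_mult[OF col, of "norm \<omega>"]])
      (simp add: norm_mult)
  have "(\<Sum>n<M. norm (perturbed_image A x z n)) = 0"
    by (intro sum.neutral) (simp add: image)
  then have "l1_norm (perturbed_image A x z) = (\<Sum>n. norm (perturbed_image A x z (n + M)))"
    unfolding l1_norm_def using suminf_split_initial_segment[OF sm, of M] by simp
  also have "\<dots> = norm \<omega> * (\<Sum>n. norm (A (n + M) k))"
    using suminf_mult[OF summable_ignore_initial_segment[OF col, of M], of "norm \<omega>"]
    by (simp add: image norm_mult)
  finally show ?thesis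
    unfolding perturbed_seminorm_def x_def[symmetric] z_def[symmetric]
    by (simp add: coords partial)
qed

context sum_extension
begin

lemma abs_dominated:
  assumes x: "x \<in> phi" and G: "finite G" and zG: "\<And>\<xi>. \<xi> \<notin> G \<Longrightarrow> z \<xi> = 0"
  shows "\<bar>Re (suminf x + (\<Sum>\<xi>\<in>G. z \<xi> * val \<xi>))\<bar> \<le> C * perturbed_seminorm A N x z"
proof -
  have fin: "finite {\<xi>. z \<xi> \<noteq> 0}" using zG by (blast intro: finite_subset[OF _ G])
  have "Re (suminf (\<lambda>k. - 1 * x k) + (\<Sum>\<xi>\<in>G. (- 1 * z \<xi>) * val \<xi>))
      \<le> C * perturbed_seminorm A N (\<lambda>k. - 1 * x k) (\<lambda>\<xi>. - 1 * z \<xi>)"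
    using zG by (intro dominated phi_scale x G) auto
  also have "perturbed_seminorm A N (\<lambda>k. - 1 * x k) (\<lambda>\<xi>. - 1 * z \<xi>) = perturbed_seminorm A N x z"
    using perturbed_seminorm_scale[OF subsetD[OF phi_subset x] fin, of N "- 1"] by simp
  finally have "- Re (suminf x + (\<Sum>\<xi>\<in>G. z \<xi> * val \<xi>)) \<le> C * perturbed_seminorm A N x z"
    using suminf_minus[OF phi_summable[OF x]] by (simp add: sum_negf)
  then show ?thesis using dominated[of x G z, OF x G zG] by linarith
qed

lemma norm_image_coeff_le: "norm (val (Image_at n)) \<le> 2 * C"
proof -
  have "\<bar>Re (\<omega> * val (Image_at n))\<bar> \<le> C" if "norm \<omega> = 1" for \<omega>
  proof -
    define z where "z \<xi> = (if \<xi> = Image_at n then \<omega> else 0)" for \<xi>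
    have "perturbed_image A (\<lambda>k. 0) z = (\<lambda>n'. if n' = n then \<omega> else 0)"
      by (auto simp: fun_eq_iff perturbed_image_def row_sum_def z_def)
    then have "l1_norm (perturbed_image A (\<lambda>k. 0) z) = 1"
      using sums_single[of n "\<lambda>_. 1::real"] that
      by (simp add: l1_norm_def if_distrib[of norm] sums_iff cong: if_cong)
    moreover have "perturbed_partial A (\<lambda>k. 0) z n' = (\<lambda>m. 0)" for n'
      by (simp add: fun_eq_iff perturbed_partial_def row_partial_def z_def)
    ultimately have "perturbed_seminorm A N (\<lambda>k. 0) z = 1"
      by (simp add: perturbed_seminorm_def z_def)
    then show ?thesis
      using abs_dominated[OF phi_zero, of "{Image_at n}" z] by (simp add: z_def)
  qed
  from this[of 1] this[of \<i>] show ?thesis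
    using cmod_le[of "val (Image_at n)"] by simp
qed

lemma norm_image_coeff_minus_one_le: "norm (val (Image_at n) - 1) \<le> 2 * C + 1"
  using norm_image_coeff_le[of n] norm_triangle_ineq4[of "val (Image_at n)" 1] by simp

lemma partial_coeff_le:
  assumes n: "n < N" and F: "finite F" and e: "\<And>m. norm (e m) \<le> 1"
  shows "Re (\<Sum>m\<in>F. e m * val (Partial_at n m)) \<le> C"
proof -
  define z where "z \<xi> = (case \<xi> of Partial_at n' m \<Rightarrow> if n' = n \<and> m \<in> F then e m else 0 | _ \<Rightarrow> 0)"
    for \<xi>
  have zG: "z \<xi> = 0" if "\<xi> \<notin> Partial_at n ` F" for \<xi>
    using that by (cases \<xi>) (auto simp: z_def)
  have sum_eq: "(\<Sum>\<xi>\<in>Partial_at n ` F. z \<xi> * val \<xi>) = (\<Sum>m\<in>F. e m * val (Partial_at n m))"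
    by (subst sum.reindex) (auto simp: inj_on_def z_def)
  have seminorm_le: "perturbed_seminorm A N (\<lambda>k. 0) z \<le> 1"
  proof -
    have "perturbed_image A (\<lambda>k. 0) z = (\<lambda>_. 0)"
      by (simp add: fun_eq_iff perturbed_image_def row_sum_def z_def)
    moreover have "perturbed_partial A (\<lambda>k. 0) z n' = (\<lambda>m. if n' = n \<and> m \<in> F then e m else 0)" for n'
      by (simp add: fun_eq_iff perturbed_partial_def row_partial_def z_def)
    moreover have "sup_norm (\<lambda>m. if n' = n \<and> m \<in> F then e m else 0)
        = (if n' = n then sup_norm (\<lambda>m. if m \<in> F then e m else 0) else 0)" for n'
      by simp
    moreover have "sup_norm (\<lambda>m. if m \<in> F then e m else 0) \<le> 1"
      by (rule sup_norm_least) (simp add: e)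
    ultimately show ?thesis
      using n by (simp add: perturbed_seminorm_def z_def l1_norm_def)
  qed
  have "Re (suminf (\<lambda>k. 0) + (\<Sum>\<xi>\<in>Partial_at n ` F. z \<xi> * val \<xi>))
      \<le> C * perturbed_seminorm A N (\<lambda>k. 0) z"
    by (rule dominated[of _ _ z, OF phi_zero finite_imageI[OF F] zG])
  also have "\<dots> \<le> C" using mult_left_mono[OF seminorm_le C_nonneg] by simp
  finally show ?thesis by (simp add: sum_eq)
qed

lemma summable_partial_coeff:
  assumes n: "n < N"
  shows "summable (\<lambda>m. norm (val (Partial_at n m)))"
proof (rule summableI_nonneg_bounded)
  fix M
  define v where "v m = val (Partial_at n m)" for m
  have "(\<Sum>m<M. \<bar>Re (v m)\<bar>) = Re (\<Sum>m<M. of_real (sgn (Re (v m))) * v m)"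
    by (simp add: abs_sgn mult.commute)
  also have "\<dots> \<le> C"
    unfolding v_def by (rule partial_coeff_le[OF n]) (auto simp: abs_sgn_eq)
  finally have re: "(\<Sum>m<M. \<bar>Re (v m)\<bar>) \<le> C" .
  have "(\<Sum>m<M. \<bar>Im (v m)\<bar>) = Re (\<Sum>m<M. (- \<i> * of_real (sgn (Im (v m)))) * v m)"
    by (simp add: abs_sgn mult.commute)
  also have "\<dots> \<le> C"
    unfolding v_def by (rule partial_coeff_le[OF n]) (auto simp: abs_sgn_eq norm_mult)
  finally have im: "(\<Sum>m<M. \<bar>Im (v m)\<bar>) \<le> C" .
  have "(\<Sum>m<M. norm (v m)) \<le> (\<Sum>m<M. \<bar>Re (v m)\<bar> + \<bar>Im (v m)\<bar>)"
    by (intro sum_mono cmod_le)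
  with re im show "(\<Sum>m<M. norm (val (Partial_at n m))) \<le> 2 * C"
    by (simp add: v_def sum.distrib)
qed simp

definition theta :: "nat \<Rightarrow> nat \<Rightarrow> complex" where
  "theta n k = val (Const_at n) - (\<Sum>m\<in>{1..k}. val (Partial_at n m))"

lemma theta_bounded_variation:
  assumes "n < N"
  shows "summable (\<lambda>k. norm (theta n (Suc k) - theta n k))"
proof -
  have "theta n (Suc k) - theta n k = - val (Partial_at n (Suc k))" for k
    by (simp add: theta_def)
  then show ?thesis
    using summable_partial_coeff[OF assms] summable_Suc_iff[of "\<lambda>m. norm (val (Partial_at n m))"]
    by simp
qed

lemma sum_cancelling_perturbation:
  "(\<Sum>\<xi>\<in>cancelling_support N M k. cancelling_perturbation A N M k \<omega> \<xi> * val \<xi>)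
    = - \<omega> * ((if k < N then val (Coord_at k) else 0) + (\<Sum>n<M. A n k * val (Image_at n))
      + (\<Sum>n<N. A n k * theta n k))"
proof -
  define z where "z = cancelling_perturbation A N M k \<omega>"
  define I where "I = Image_at ` {..<M}"
  define P where "P = case_prod Partial_at ` ({..<N} \<times> {1..k})"
  define K where "K = Const_at ` {..<N}"
  have "Coord_at k \<notin> I \<union> P \<union> K" "I \<inter> P = {}" "(I \<union> P) \<inter> K = {}"
    by (auto simp: I_def P_def K_def)
  moreover have "finite I" "finite P" "finite K" by (simp_all add: I_def P_def K_def)
  ultimately have "(\<Sum>\<xi>\<in>cancelling_support N M k. z \<xi> * val \<xi>) = z (Coord_at k) * val (Coord_at k)
      + ((\<Sum>\<xi>\<in>I. z \<xi> * val \<xi>) + (\<Sum>\<xi>\<in>P. z \<xi> * val \<xi>)) + (\<Sum>\<xi>\<in>K. z \<xi> * val \<xi>)"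
    by (simp add: cancelling_support_def I_def P_def K_def sum.union_disjoint)
  moreover have "(\<Sum>\<xi>\<in>I. z \<xi> * val \<xi>) = (\<Sum>n<M. - \<omega> * (A n k * val (Image_at n)))"
    unfolding I_def by (subst sum.reindex) (auto simp: inj_on_def z_def cancelling_perturbation_def mult.assoc)
  moreover have "(\<Sum>\<xi>\<in>P. z \<xi> * val \<xi>) = (\<Sum>n<N. \<Sum>m\<in>{1..k}. \<omega> * (A n k * val (Partial_at n m)))"
    unfolding P_def by (subst sum.reindex)
      (auto simp: inj_on_def z_def cancelling_perturbation_def sum.cartesian_product intro!: sum.cong)
  moreover have "(\<Sum>\<xi>\<in>K. z \<xi> * val \<xi>) = (\<Sum>n<N. - \<omega> * (A n k * val (Const_at n)))"
    unfolding K_def by (subst sum.reindex) (auto simp: inj_on_def z_def cancelling_perturbation_def mult.assoc)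
  ultimately show ?thesis
    by (simp add: z_def cancelling_perturbation_def theta_def algebra_simps sum_distrib_left
        sum_subtractf sum_negf)
qed

lemma column_approx:
  "\<bar>Re \<omega> - Re (\<omega> * ((if k < N then val (Coord_at k) else 0) + (\<Sum>n<M. A n k * val (Image_at n))
      + (\<Sum>n<N. A n k * theta n k)))\<bar> \<le> C * (norm \<omega> * (\<Sum>n. norm (A (n + M) k)))"
proof -
  have "(\<lambda>j. \<omega> * delta k j) = (\<lambda>j. if j = k then \<omega> else 0)" by (auto simp: delta_def)
  then have "suminf (\<lambda>j. \<omega> * delta k j) = \<omega>"
    using sums_single[of k "\<lambda>_. \<omega>"] by (simp add: sums_iff)
  moreover have "\<bar>Re (suminf (\<lambda>j. \<omega> * delta k j)
      + (\<Sum>\<xi>\<in>cancelling_support N M k. cancelling_perturbation A N M k \<omega> \<xi> * val \<xi>))\<bar>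
    \<le> C * perturbed_seminorm A N (\<lambda>j. \<omega> * delta k j) (cancelling_perturbation A N M k \<omega>)"
    by (rule abs_dominated[OF phi_scale[OF delta_in_phi] finite_cancelling_support
          cancelling_perturbation_outside])
  ultimately show ?thesis
    by (simp add: sum_cancelling_perturbation perturbed_seminorm_cancelling[OF summable_column[OF phi_subset]])
qed

lemma summable_image_coeff: "summable (\<lambda>n. norm (A n k * val (Image_at n)))"
proof (rule summable_comparison_test'[OF summable_mult[OF summable_column[OF phi_subset, of k], of "2 * C"]])
  show "norm (norm (A n k * val (Image_at n))) \<le> 2 * C * norm (A n k)" for n
    using mult_left_mono[OF norm_image_coeff_le[of n] norm_ge_zero[of "A n k"]]
    by (simp add: norm_mult mult.commute)
qed

lemma column_identity:
  "(if k < N then val (Coord_at k) else 0) + (\<Sum>n. A n k * val (Image_at n))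
    + (\<Sum>n<N. A n k * theta n k) = 1"
    (is "?E = 1")
proof -
  define E where "E M = (if k < N then val (Coord_at k) else 0) + (\<Sum>n<M. A n k * val (Image_at n))
      + (\<Sum>n<N. A n k * theta n k)" for M
  have "(\<lambda>M. \<Sum>n<M. A n k * val (Image_at n)) \<longlonglongrightarrow> (\<Sum>n. A n k * val (Image_at n))"
    by (rule summable_LIMSEQ[OF summable_norm_cancel[OF summable_image_coeff]])
  then have E: "E \<longlonglongrightarrow> ?E"
    unfolding E_def by (intro tendsto_add tendsto_const)
  have tail: "(\<lambda>M. \<Sum>n. norm (A (n + M) k)) \<longlonglongrightarrow> 0"
    by (rule suminf_tail_tendsto_zero[OF summable_column[OF phi_subset]])
  have "\<bar>Re \<omega> - Re (\<omega> * ?E)\<bar> \<le> C * (norm \<omega> * 0)" for \<omega>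
  proof (rule LIMSEQ_le)
    show "(\<lambda>M. \<bar>Re \<omega> - Re (\<omega> * E M)\<bar>) \<longlonglongrightarrow> \<bar>Re \<omega> - Re (\<omega> * ?E)\<bar>"
      by (intro tendsto_intros E)
    show "(\<lambda>M. C * (norm \<omega> * (\<Sum>n. norm (A (n + M) k)))) \<longlonglongrightarrow> C * (norm \<omega> * 0)"
      by (intro tendsto_intros tail)
    show "\<exists>M0. \<forall>M\<ge>M0. \<bar>Re \<omega> - Re (\<omega> * E M)\<bar> \<le> C * (norm \<omega> * (\<Sum>n. norm (A (n + M) k)))"
      using column_approx by (auto simp: E_def)
  qed
  from this[of 1] this[of \<i>] show ?thesis by (simp add: complex_eq_iff)
qed

text \<open>The even rows of the replacing matrix are the rows of \<open>A\<close>; the odd rows supply, in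
  column \<open>k\<close>, exactly what \<open>column_identity\<close> says is missing from \<open>\<Sum>\<^sub>n A n k\<close> to reach 1.\<close>
definition odd_row :: "nat \<Rightarrow> nat \<Rightarrow> complex" where
  "odd_row n k = (val (Image_at n) - 1) * A n k
     + (if n < N then (if k = n then val (Coord_at n) else 0) + theta n k * A n k else 0)"

definition replacing_matrix :: cmatrix where
  "replacing_matrix r = (if even r then A (r div 2) else odd_row (r div 2))"

definition odd_row_sum :: "nat \<Rightarrow> seq \<Rightarrow> complex" where
  "odd_row_sum n x = (val (Image_at n) - 1) * row_sum A n x
     + (if n < N then val (Coord_at n) * x n + (\<Sum>k. theta n k * (A n k * x k)) else 0)"

lemma odd_row_sums:
  assumes x: "x \<in> lA A"
  shows "(\<lambda>k. odd_row n k * x k) sums odd_row_sum n x"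
proof -
  have image: "(\<lambda>k. (val (Image_at n) - 1) * (A n k * x k)) sums ((val (Image_at n) - 1) * row_sum A n x)"
    unfolding row_sum_def by (intro sums_mult summable_sums lA_summable_row x)
  show ?thesis
  proof (cases "n < N")
    case True
    have "(\<lambda>k. if k = n then val (Coord_at n) * x k else 0) sums (val (Coord_at n) * x n)"
      by (rule sums_single)
    moreover have "(\<lambda>k. theta n k * (A n k * x k)) sums (\<Sum>k. theta n k * (A n k * x k))"
      by (intro summable_sums summable_mult_bounded_variation theta_bounded_variation True
          lA_summable_row x)
    moreover have "(\<lambda>k. odd_row n k * x k) = (\<lambda>k. (val (Image_at n) - 1) * (A n k * x k)
        + ((if k = n then val (Coord_at n) * x k else 0) + theta n k * (A n k * x k)))"
      using True by (auto simp: fun_eq_iff odd_row_def algebra_simps)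
    ultimately show ?thesis
      using sums_add[OF image sums_add] True by (simp add: odd_row_sum_def)
  next
    case False
    then show ?thesis using image by (simp add: odd_row_def odd_row_sum_def mult.assoc)
  qed
qed

lemma summable_odd_row_sum:
  assumes x: "x \<in> lA A"
  shows "summable (\<lambda>n. norm (odd_row_sum n x))"
proof (rule summable_comparison_test'[OF summable_mult[OF lA_summable_row_sum[OF x], of "2 * C + 1"]])
  fix n assume "N \<le> n"
  then have "norm (odd_row_sum n x) = norm (val (Image_at n) - 1) * norm (row_sum A n x)"
    by (simp add: odd_row_sum_def norm_mult)
  then show "norm (norm (odd_row_sum n x)) \<le> (2 * C + 1) * norm (row_sum A n x)"
    by (simp add: mult_right_mono norm_image_coeff_minus_one_le)
qed

lemma lA_replacing_matrix: "lA replacing_matrix = lA A"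
proof
  show "lA A \<subseteq> lA replacing_matrix"
  proof
    fix x assume x: "x \<in> lA A"
    have "row_sum replacing_matrix r x = (if even r then row_sum A (r div 2) x else odd_row_sum (r div 2) x)"
      and "summable (\<lambda>k. replacing_matrix r k * x k)" for r
      using odd_row_sums[OF x, of "r div 2"] lA_summable_row[OF x, of "r div 2"]
      by (auto simp: replacing_matrix_def row_sum_def sums_iff)
    moreover have "summable (\<lambda>r. norm (if even r then row_sum A (r div 2) x else odd_row_sum (r div 2) x))"
      by (rule interleave_sums(1)[OF lA_summable_row_sum[OF x] summable_odd_row_sum[OF x]])
    ultimately show "x \<in> lA replacing_matrix" by (simp add: lA_iff)
  qed
  show "lA replacing_matrix \<subseteq> lA A"
  proof
    fix x assume x: "x \<in> lA replacing_matrix"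
    have "row_sum replacing_matrix (2 * n) x = row_sum A n x" for n
      by (simp add: row_sum_def replacing_matrix_def)
    moreover have "summable (\<lambda>n. norm (row_sum replacing_matrix (2 * n) x))"
      by (rule summable_even_part[OF lA_summable_row_sum[OF x]]) simp
    moreover have "summable (\<lambda>k. A n k * x k)" for n
      using lA_summable_row[OF x, of "2 * n"] by (simp add: replacing_matrix_def)
    ultimately show "x \<in> lA A" by (simp add: lA_iff)
  qed
qed

lemma summable_odd_row_column: "summable (\<lambda>n. norm (odd_row n k))"
proof (rule summable_comparison_test'[OF summable_mult[OF summable_column[OF phi_subset], of "2 * C + 1"]])
  fix n assume "N \<le> n"
  then have "norm (odd_row n k) = norm (val (Image_at n) - 1) * norm (A n k)"
    by (simp add: odd_row_def norm_mult)
  then show "norm (norm (odd_row n k)) \<le> (2 * C + 1) * norm (A n k)"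
    by (simp add: mult_right_mono norm_image_coeff_minus_one_le)
qed

lemma replacing_matrix_column_sums: "(\<lambda>r. replacing_matrix r k) sums 1"
proof -
  define fin where "fin n = (if n < N then (if k = n then val (Coord_at n) else 0) + theta n k * A n k else 0)"
    for n
  have col: "summable (\<lambda>n. norm (A n k))" by (rule summable_column[OF phi_subset])
  have coeff: "summable (\<lambda>n. A n k * val (Image_at n))"
    by (rule summable_norm_cancel[OF summable_image_coeff])
  have odd_eq: "odd_row n k = (A n k * val (Image_at n) - A n k) + fin n" for n
    by (simp add: odd_row_def fin_def algebra_simps)
  have fin: "summable fin" "suminf fin = (if k < N then val (Coord_at k) else 0) + (\<Sum>n<N. A n k * theta n k)"
    using suminf_finite[of "{..<N}" fin] summable_finite[of "{..<N}" fin]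
    by (auto simp: fin_def sum.distrib mult.commute)
  have "summable (\<lambda>n. A n k * val (Image_at n) - A n k)"
    by (intro summable_diff coeff summable_norm_cancel[OF col])
  then have "(\<Sum>n. odd_row n k) = ((\<Sum>n. A n k * val (Image_at n)) - (\<Sum>n. A n k)) + suminf fin"
    unfolding odd_eq using suminf_add[OF _ fin(1)] suminf_diff[OF coeff summable_norm_cancel[OF col]]
    by simp
  then have "(\<Sum>n. A n k) + (\<Sum>n. odd_row n k) = 1"
    using column_identity[of k] fin(2) by (simp add: algebra_simps)
  moreover have "(\<lambda>r. replacing_matrix r k) = (\<lambda>r. if even r then A (r div 2) k else odd_row (r div 2) k)"
    by (simp add: fun_eq_iff replacing_matrix_def)
  ultimately show ?thesis
    using interleave_sums(2)[OF col summable_odd_row_column[of k]] by simp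
qed

end

lemma sigma_imp_l_replaceable:
  assumes pq: "\<And>n. p n < q n" and q: "filterlim q at_top sequentially"
    and phi: "phi \<subseteq> lA A" and sub: "lA A \<subseteq> sigma_pq_s p q"
  shows "l_replaceable A"
proof -
  obtain C N where "C > 0" "\<forall>x\<in>phi. norm (suminf x) \<le> C * lA_seminorm A N x"
    using sigma_imp_phi_sum_bounded[OF pq q sub phi] by blast
  then obtain val where "sum_extension A C N val"
    using sum_extension_exists[OF phi] by (meson less_imp_le)
  then interpret sum_extension A C N val .
  show ?thesis
    unfolding l_replaceable_def using lA_replacing_matrix replacing_matrix_column_sums by blast
qed

theorem mainTheorem2:
  fixes A :: cmatrix and p q :: "nat \<Rightarrow> nat"
  assumes "\<And>n. p n < q n"
    and "filterlim q at_top sequentially"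
    and "phi \<subseteq> lA A"
    and "DF_lA p q A = lA A"
  shows "l_replaceable A \<longleftrightarrow> lA A \<subseteq> sigma_pq_s p q"
  using l_replaceable_imp_sigma[OF _ assms(4)] sigma_imp_l_replaceable[OF assms(1-3)] by blast

end
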